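(* In the multispectral 2D Toda setting described in the context, for $a,b\in\{1,\dots,D\}$ the Baker function $\Psi_1$ satisfies $$\frac{\partial\Psi_1}{\partial t_{1,(a,b)}}=\frac{\partial^2\Psi_1}{\partial t_{1,a}\partial t_{1,b}}+U_{a,b}\Psi_1,$$ where $U_{a,b}=-V_{a,b}-V_{b,a}$ and $V_{a,b}=\frac{\partial\beta_1}{\partial t_{1,a}}\Lambda_b$.
   Context: Multi-indices ordered by graded lexicographic order; $\chi(\boldsymbol x)$ the semi-infinite vector of monomials in this order; semi-infinite matrices partitioned in blocks indexed by $[k]=\{|\boldsymbol\alpha|=k\}$. Spectral matrices $(\Lambda_a)_{\boldsymbol\alpha,\boldsymbol\beta}=\delta_{\boldsymbol\alpha+\boldsymbol e_a,\boldsymbol\beta}$, $\boldsymbol\Lambda^{\boldsymbol\alpha}=\Lambda_1^{\alpha_1}\cdots\Lambda_D^{\alpha_D}$. $G$ is a semi-infinite complex matrix; times $t_i=(t_{i,\boldsymbol\alpha})_{\boldsymbol\alpha\in\mathbb Z_+^D}$; $t_{1,a}:=t_{1,\boldsymbol e_a}$, $t_{1,(a,b)}:=t_{1,\boldsymbol e_a+\boldsymbol e_b}$; $W^{(0)}_i(t_i)=\exp\big(\sum_{\boldsymbol\alpha}t_{i,\boldsymbol\alpha}\boldsymbol\Lambda^{\boldsymbol\alpha}\big)$; $G(t)=W_1^{(0)}(t_1)G(W_2^{(0)}(t_2))^{-\top}$ assumed to factor as $G(t)=S_1(t)^{-1}H(t)S_2(t)^{-\top}$ with $S_i$ block lower unitriangular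 and $H$ block diagonal. $\beta_1$ is the semi-infinite matrix whose only nonzero blocks are the first block subdiagonal blocks $(S_1)_{[k],[k-1]}$ of $S_1$. Baker function $\Psi_1(t,\boldsymbol z)=S_1(t)W^{(0)}_1(t_1)\chi(\boldsymbol z)$. *)

theory Defs
  imports "HOL-Analysis.Analysis" "HOL-Library.Poly_Mapping"
begin

text \<open>
  Multi-indices in Z_+^D are functions 'd => nat on a
  finite index type 'd (so D = CARD('d) and a, b range over 'd).  Semi-infinite matrices
  are indexed directly by multi-indices; block [k] = multi-indices of length k.
  The times t_{1,alpha}, t_{2,alpha} are formal variables; all t-dependent objects are
  formal power series in these infinitely many variables, with complex coefficients,
  represented as coefficient functions on monomials ('v =>0 nat).
\<close>

type_synonym 'd mi = "'d \<Rightarrow> nat"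

datatype 'd tvar = T1 "'d \<Rightarrow> nat" | T2 "'d \<Rightarrow> nat"

type_synonym 'd fps = "('d tvar \<Rightarrow>\<^sub>0 nat) \<Rightarrow> complex"
type_synonym 'd fmat = "'d mi \<Rightarrow> 'd mi \<Rightarrow> 'd fps"
type_synonym 'd fvec = "'d mi \<Rightarrow> 'd fps"

definition mi_len :: "('d::finite) mi \<Rightarrow> nat" where
  "mi_len \<alpha> = (\<Sum>i\<in>UNIV. \<alpha> i)"

definition mi_add :: "'d mi \<Rightarrow> 'd mi \<Rightarrow> 'd mi" where
  "mi_add \<alpha> \<beta> = (\<lambda>i. \<alpha> i + \<beta> i)"

definition mi_e :: "'d \<Rightarrow> 'd mi" where
  "mi_e a = (\<lambda>i. if i = a then 1 else 0)"

definition fconst :: "complex \<Rightarrow> 'd fps" where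
  "fconst c = (\<lambda>m. if m = 0 then c else 0)"

definition fvar :: "'d tvar \<Rightarrow> 'd fps" where
  "fvar v = (\<lambda>m. if m = Poly_Mapping.single v 1 then 1 else 0)"

definition fadd :: "'d fps \<Rightarrow> 'd fps \<Rightarrow> 'd fps" where
  "fadd f g = (\<lambda>m. f m + g m)"

definition fmul :: "'d fps \<Rightarrow> 'd fps \<Rightarrow> 'd fps" where
  "fmul f g = (\<lambda>m. \<Sum>p\<in>{p. fst p + snd p = m}. f (fst p) * g (snd p))"

definition fderiv :: "'d tvar \<Rightarrow> 'd fps \<Rightarrow> 'd fps" where
  "fderiv v f = (\<lambda>m. of_nat (Poly_Mapping.lookup m v + 1) * f (m + Poly_Mapping.single v 1))"

text \<open>Products are taken coefficientwise; the sums involved are finite in all uses.\<close>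
definition mmul :: "'d fmat \<Rightarrow> 'd fmat \<Rightarrow> 'd fmat" where
  "mmul A B = (\<lambda>\<alpha> \<beta> m. infsum (\<lambda>\<gamma>. fmul (A \<alpha> \<gamma>) (B \<gamma> \<beta>) m) UNIV)"

definition mvmul :: "'d fmat \<Rightarrow> 'd fvec \<Rightarrow> 'd fvec" where
  "mvmul A v = (\<lambda>\<alpha> m. infsum (\<lambda>\<gamma>. fmul (A \<alpha> \<gamma>) (v \<gamma>) m) UNIV)"

definition mone :: "'d fmat" where
  "mone = (\<lambda>\<alpha> \<beta>. fconst (if \<alpha> = \<beta> then 1 else 0))"

definition mtr :: "'d fmat \<Rightarrow> 'd fmat" where
  "mtr A = (\<lambda>\<alpha> \<beta>. A \<beta> \<alpha>)"

definition mneg :: "'d fmat \<Rightarrow> 'd fmat" where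
  "mneg A = (\<lambda>\<alpha> \<beta> m. - A \<alpha> \<beta> m)"

definition madd :: "'d fmat \<Rightarrow> 'd fmat \<Rightarrow> 'd fmat" where
  "madd A B = (\<lambda>\<alpha> \<beta>. fadd (A \<alpha> \<beta>) (B \<alpha> \<beta>))"

definition mderiv :: "'d tvar \<Rightarrow> 'd fmat \<Rightarrow> 'd fmat" where
  "mderiv v A = (\<lambda>\<alpha> \<beta>. fderiv v (A \<alpha> \<beta>))"

definition vderiv :: "'d tvar \<Rightarrow> 'd fvec \<Rightarrow> 'd fvec" where
  "vderiv v x = (\<lambda>\<alpha>. fderiv v (x \<alpha>))"

definition vadd :: "'d fvec \<Rightarrow> 'd fvec \<Rightarrow> 'd fvec" where
  "vadd x y = (\<lambda>\<alpha>. fadd (x \<alpha>) (y \<alpha>))"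

fun mpow :: "'d fmat \<Rightarrow> nat \<Rightarrow> 'd fmat" where
  "mpow A 0 = mone"
| "mpow A (Suc n) = mmul A (mpow A n)"

definition mexp :: "'d fmat \<Rightarrow> 'd fmat" where
  "mexp A = (\<lambda>\<alpha> \<beta> m. infsum (\<lambda>n. mpow A n \<alpha> \<beta> m / fact n) UNIV)"

definition minvertible :: "'d fmat \<Rightarrow> bool" where
  "minvertible A \<longleftrightarrow> (\<exists>B. mmul A B = mone \<and> mmul B A = mone)"

definition minv :: "'d fmat \<Rightarrow> 'd fmat" where
  "minv A = (THE B. mmul A B = mone \<and> mmul B A = mone)"

definition block_lower_unitriangular :: "('d::finite) fmat \<Rightarrow> bool" where
  "block_lower_unitriangular S \<longleftrightarrow>
     (\<forall>\<alpha> \<beta>. mi_len \<beta> > mi_len \<alpha> \<longrightarrow> S \<alpha> \<beta> = fconst 0) \<and>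
     (\<forall>\<alpha> \<beta>. mi_len \<beta> = mi_len \<alpha> \<longrightarrow> S \<alpha> \<beta> = fconst (if \<alpha> = \<beta> then 1 else 0))"

definition block_diagonal :: "('d::finite) fmat \<Rightarrow> bool" where
  "block_diagonal H \<longleftrightarrow> (\<forall>\<alpha> \<beta>. mi_len \<beta> \<noteq> mi_len \<alpha> \<longrightarrow> H \<alpha> \<beta> = fconst 0)"

definition Lam :: "'d \<Rightarrow> 'd fmat" where
  "Lam a = (\<lambda>\<alpha> \<beta>. fconst (if \<beta> = mi_add \<alpha> (mi_e a) then 1 else 0))"

text \<open>Lambda^gamma = Lambda_1^{gamma_1} ... Lambda_D^{gamma_D}; since the Lambda_a are
  commuting shifts this is the shift (Lambda^gamma)_{alpha,beta} = delta_{alpha+gamma,beta}.\<close>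
definition LamPow :: "'d mi \<Rightarrow> 'd fmat" where
  "LamPow \<gamma> = (\<lambda>\<alpha> \<beta>. fconst (if \<beta> = mi_add \<alpha> \<gamma> then 1 else 0))"

text \<open>W_i^{(0)}(t_i) = exp(sum_gamma t_{i,gamma} Lambda^gamma); tc = T1 or T2 selects i\<close>
definition W0 :: "('d mi \<Rightarrow> 'd tvar) \<Rightarrow> 'd fmat" where
  "W0 tc = mexp (\<lambda>\<alpha> \<beta> m. infsum (\<lambda>\<gamma>. fmul (fvar (tc \<gamma>)) (LamPow \<gamma> \<alpha> \<beta>) m) UNIV)"

definition Gt :: "('d mi \<Rightarrow> 'd mi \<Rightarrow> complex) \<Rightarrow> 'd fmat" where
  "Gt G = mmul (mmul (W0 T1) (\<lambda>\<alpha> \<beta>. fconst (G \<alpha> \<beta>))) (mtr (minv (W0 T2)))"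

definition beta1 :: "('d::finite) fmat \<Rightarrow> 'd fmat" where
  "beta1 S = (\<lambda>\<alpha> \<beta>. if mi_len \<alpha> = mi_len \<beta> + 1 then S \<alpha> \<beta> else fconst 0)"

definition chi :: "('d::finite \<Rightarrow> complex) \<Rightarrow> 'd mi \<Rightarrow> complex" where
  "chi z = (\<lambda>\<beta>. \<Prod>i\<in>UNIV. z i ^ \<beta> i)"

definition Psi1 :: "('d::finite) fmat \<Rightarrow> ('d \<Rightarrow> complex) \<Rightarrow> 'd fvec" where
  "Psi1 S z = (let M = mmul S (W0 T1) in
     (\<lambda>\<alpha> m. infsum (\<lambda>\<beta>. M \<alpha> \<beta> m * chi z \<beta>) UNIV))"

definition Vab :: "('d::finite) fmat \<Rightarrow> 'd \<Rightarrow> 'd \<Rightarrow> 'd fmat" where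
  "Vab S a b = mmul (mderiv (T1 (mi_e a)) (beta1 S)) (Lam b)"

definition Uab :: "('d::finite) fmat \<Rightarrow> 'd \<Rightarrow> 'd \<Rightarrow> 'd fmat" where
  "Uab S a b = madd (mneg (Vab S a b)) (mneg (Vab S b a))"

end

theory Submission
  imports Defs
begin

text \<open>
  All objects are formal power series in the times; products of semi-infinite matrices are
  coefficientwise finite sums as long as the factors are row finite.

  Differentiating the wave matrix S1 W0 in t_{1,g} gives D_g W0 with
  D_g = \<partial>_g S1 + S1 \<Lambda>^g, and we put B_g = D_g S1^{-1}. Since \<partial>_g G(t) = \<Lambda>^g G(t), the
  block upper triangular matrix R = S1 G(t) = H S2^{-T} satisfies \<partial>_g R = B_g R; as the
  block diagonal H of R is invertible, B_g is block upper triangular as well. Hence so is the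
  zero-curvature defect Z = B_{a+b} - \<partial>_a B_b - B_b B_a - U_{a,b}. On the other hand, in
  Z S1 = D_{a+b} - \<partial>_a D_b - D_b \<Lambda>^a - U_{a,b} S1 the terms S1 \<Lambda>^{a+b} cancel, and on and above
  the block diagonal only the first block subdiagonal of \<partial> S1 survives, where it gives
  V_{a,b} + V_{b,a} and is cancelled by U_{a,b}. So Z S1, and with it Z, is strictly block lower
  triangular; thus Z = 0, which turns into the stated equation after multiplication by
  W0 \<chi>(z).
\<close>

section \<open>Formal power series in the times\<close>

abbreviation (input) splits :: "('a \<Rightarrow>\<^sub>0 nat) \<Rightarrow> (('a \<Rightarrow>\<^sub>0 nat) \<times> ('a \<Rightarrow>\<^sub>0 nat)) set" where
  "splits m \<equiv> {p. fst p + snd p = m}"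

abbreviation (input) monom1 :: "'a \<Rightarrow> 'a \<Rightarrow>\<^sub>0 nat" where
  "monom1 v \<equiv> Poly_Mapping.single v 1"

lemma finite_summands: "finite {p::'a \<Rightarrow>\<^sub>0 nat. \<exists>q. p + q = m}"
proof -
  let ?B = "{..sum (Poly_Mapping.lookup m) (Poly_Mapping.keys m)}"
  let ?F = "{f. \<forall>x. (x \<in> Poly_Mapping.keys m \<longrightarrow> f x \<in> ?B) \<and> (x \<notin> Poly_Mapping.keys m \<longrightarrow> f x = 0)}"
  have sub: "Poly_Mapping.lookup ` {p. \<exists>q. p + q = m} \<subseteq> ?F"
  proof
    fix f assume "f \<in> Poly_Mapping.lookup ` {p. \<exists>q. p + q = m}"
    then obtain p q where f: "f = Poly_Mapping.lookup p" and m: "p + q = m" by auto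
    have le: "Poly_Mapping.lookup p x \<le> Poly_Mapping.lookup m x" for x
      using m by (auto simp: lookup_add)
    have "f x \<in> ?B" if "x \<in> Poly_Mapping.keys m" for x
    proof -
      have "Poly_Mapping.lookup m x \<le> sum (Poly_Mapping.lookup m) (Poly_Mapping.keys m)"
        by (rule member_le_sum) (use that in simp_all)
      then show ?thesis using le[of x] f by simp
    qed
    moreover have "f x = 0" if "x \<notin> Poly_Mapping.keys m" for x
      using le[of x] that f by (simp add: in_keys_iff)
    ultimately show "f \<in> ?F" by simp
  qed
  have fin: "finite ?F"
    by (rule finite_set_of_finite_funs) simp_all
  have inj: "inj_on Poly_Mapping.lookup {p. \<exists>q. p + q = m}"
    by (rule inj_onI) (simp add: poly_mapping_eqI)
  show ?thesis
    using finite_imageD[OF finite_subset[OF sub fin] inj] .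
qed

lemma finite_splits: "finite (splits (m::'a \<Rightarrow>\<^sub>0 nat))"
proof (rule finite_subset)
  show "splits m \<subseteq> {p. \<exists>q. p + q = m} \<times> {p. \<exists>q. p + q = m}"
    by (auto simp: mem_Times_iff) (metis add.commute)
qed (simp add: finite_summands)

lemma fmul_eq_sum: "fmul f g m = (\<Sum>x\<in>splits m. f (fst x) * g (snd x))"
  by (simp add: fmul_def)

lemma fmul_eq_0:
  assumes "\<And>p q. p + q = m \<Longrightarrow> f p \<noteq> 0 \<Longrightarrow> g q \<noteq> 0 \<Longrightarrow> False"
  shows "fmul f g m = 0"
  unfolding fmul_eq_sum by (rule sum.neutral) (use assms in auto)

lemma sum_splits_assoc:
  fixes g :: "('a \<Rightarrow>\<^sub>0 nat) \<Rightarrow> ('a \<Rightarrow>\<^sub>0 nat) \<Rightarrow> ('a \<Rightarrow>\<^sub>0 nat) \<Rightarrow> complex"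
  shows "(\<Sum>x\<in>splits m. \<Sum>y\<in>splits (fst x). g (fst y) (snd y) (snd x))
       = (\<Sum>x\<in>splits m. \<Sum>y\<in>splits (snd x). g (fst x) (fst y) (snd y))"
proof -
  have "(\<Sum>(x,y)\<in>Sigma (splits m) (\<lambda>x. splits (fst x)). g (fst y) (snd y) (snd x))
      = (\<Sum>(x,y)\<in>Sigma (splits m) (\<lambda>x. splits (snd x)). g (fst x) (fst y) (snd y))"
    by (rule sum.reindex_bij_witness
          [where j="\<lambda>z. ((fst (snd z), snd (snd z) + snd (fst z)), (snd (snd z), snd (fst z)))"
             and i="\<lambda>z. ((fst (fst z) + fst (snd z), snd (snd z)), (fst (fst z), fst (snd z)))"])
       (auto simp: add.assoc)
  then show ?thesis
    by (simp add: sum.Sigma finite_splits)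
qed

lemma sum_splits_swap:
  fixes h :: "('a \<Rightarrow>\<^sub>0 nat) \<Rightarrow> ('a \<Rightarrow>\<^sub>0 nat) \<Rightarrow> complex"
  shows "(\<Sum>x\<in>splits m. h (fst x) (snd x)) = (\<Sum>x\<in>splits m. h (snd x) (fst x))"
  by (rule sum.reindex_bij_witness[where i="\<lambda>x. (snd x, fst x)" and j="\<lambda>x. (snd x, fst x)"])
     (auto simp: add.commute)

lemma minus_monom1_add:
  assumes "Poly_Mapping.lookup p v \<noteq> 0"
  shows "p - monom1 v + monom1 v = p"
  using assms
  by (intro poly_mapping_eqI) (auto simp: lookup_add lookup_minus lookup_single when_def)

lemma minus_monom1_add_eq:
  assumes "p + q = m + monom1 v" and "Poly_Mapping.lookup p v \<noteq> 0"
  shows "p - monom1 v + q = m"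
proof (rule poly_mapping_eqI)
  fix k
  have "Poly_Mapping.lookup (p + q) k = Poly_Mapping.lookup (m + monom1 v) k"
    using assms(1) by simp
  then show "Poly_Mapping.lookup (p - monom1 v + q) k = Poly_Mapping.lookup m k"
    using assms(2) by (simp add: lookup_add lookup_minus lookup_single when_def split: if_splits)
qed

lemma add_monom1_eq_monom1:
  assumes "m + monom1 v = monom1 w"
  shows "m = 0 \<and> v = w"
proof -
  have lookup: "Poly_Mapping.lookup m k + Poly_Mapping.lookup (monom1 v) k
      = Poly_Mapping.lookup (monom1 w) k" for k
    using arg_cong[OF assms, of "\<lambda>x. Poly_Mapping.lookup x k"] by (simp add: lookup_add)
  have "v = w"
  proof (rule ccontr)
    assume "v \<noteq> w"
    then show False using lookup[of v] by (simp add: lookup_single)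
  qed
  moreover have "m = 0"
  proof (rule poly_mapping_eqI)
    fix k show "Poly_Mapping.lookup m k = Poly_Mapping.lookup 0 k"
      using lookup[of k] \<open>v = w\<close> by (cases "k = w") (simp_all add: lookup_single)
  qed
  ultimately show ?thesis by simp
qed

text \<open>The index shift behind the Leibniz rule; splittings whose first part does not contain the
  variable v contribute nothing on the right.\<close>
lemma sum_splits_shift:
  fixes h :: "('a \<Rightarrow>\<^sub>0 nat) \<Rightarrow> ('a \<Rightarrow>\<^sub>0 nat) \<Rightarrow> complex"
  shows "(\<Sum>x\<in>splits m. of_nat (Poly_Mapping.lookup (fst x) v + 1) * h (fst x + monom1 v) (snd x))
       = (\<Sum>x\<in>splits (m + monom1 v). of_nat (Poly_Mapping.lookup (fst x) v) * h (fst x) (snd x))"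
proof -
  let ?P = "{x\<in>splits (m + monom1 v). Poly_Mapping.lookup (fst x) v \<noteq> 0}"
  have "(\<Sum>x\<in>splits (m + monom1 v). of_nat (Poly_Mapping.lookup (fst x) v) * h (fst x) (snd x))
      = (\<Sum>x\<in>?P. of_nat (Poly_Mapping.lookup (fst x) v) * h (fst x) (snd x))"
    by (rule sum.mono_neutral_right) (auto intro: finite_splits)
  also have "\<dots> = (\<Sum>x\<in>splits m. of_nat (Poly_Mapping.lookup (fst x) v + 1) * h (fst x + monom1 v) (snd x))"
  proof (rule sum.reindex_bij_witness[where i="\<lambda>x. (fst x + monom1 v, snd x)"
                                        and j="\<lambda>x. (fst x - monom1 v, snd x)"])
    fix a assume a: "a \<in> ?P"
    then have nz: "Poly_Mapping.lookup (fst a) v \<noteq> 0" and "fst a + snd a = m + monom1 v"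
      by simp_all
    then show "(fst a - monom1 v, snd a) \<in> splits m"
      using minus_monom1_add_eq by simp
    show "(fst (fst a - monom1 v, snd a) + monom1 v, snd (fst a - monom1 v, snd a)) = a"
      using minus_monom1_add[OF nz] by simp
    show "of_nat (Poly_Mapping.lookup (fst (fst a - monom1 v, snd a)) v + 1) *
          h (fst (fst a - monom1 v, snd a) + monom1 v) (snd (fst a - monom1 v, snd a)) =
          of_nat (Poly_Mapping.lookup (fst a) v) * h (fst a) (snd a)"
      using nz minus_monom1_add[OF nz] by (simp add: lookup_minus)
  next
    fix b assume "b \<in> splits m"
    then have "m = fst b + snd b" by simp
    then have "fst b + monom1 v + snd b = m + monom1 v"
      by (simp add: ac_simps)
    then show "(fst b + monom1 v, snd b) \<in> ?P"
      by (simp add: lookup_add)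
  qed simp
  finally show ?thesis by simp
qed

lemma fderiv_fmul: "fderiv v (fmul f g) = fadd (fmul (fderiv v f) g) (fmul f (fderiv v g))"
proof (rule ext)
  fix m
  let ?lk = "\<lambda>p. Poly_Mapping.lookup p v" and ?S = "splits (m + monom1 v)"
  have left: "fmul (fderiv v f) g m = (\<Sum>x\<in>?S. of_nat (?lk (fst x)) * (f (fst x) * g (snd x)))"
    unfolding fmul_eq_sum fderiv_def
    using sum_splits_shift[where h="\<lambda>a b. f a * g b"] by (simp add: mult.assoc)
  have "fmul f (fderiv v g) m
      = (\<Sum>x\<in>splits m. of_nat (?lk (fst x) + 1) * (g (fst x + monom1 v) * f (snd x)))"
    unfolding fmul_eq_sum fderiv_def
    using sum_splits_swap[where h="\<lambda>a b. f a * (of_nat (?lk b + 1) * g (b + monom1 v))"]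
    by (simp add: ac_simps)
  also have "\<dots> = (\<Sum>x\<in>?S. of_nat (?lk (fst x)) * (g (fst x) * f (snd x)))"
    by (rule sum_splits_shift)
  also have "\<dots> = (\<Sum>x\<in>?S. of_nat (?lk (snd x)) * (f (fst x) * g (snd x)))"
    using sum_splits_swap[where h="\<lambda>a b. of_nat (?lk a) * (g a * f b)"] by (simp add: ac_simps)
  finally have right: "fmul f (fderiv v g) m = \<dots>" .
  have "fderiv v (fmul f g) m = (\<Sum>x\<in>?S. of_nat (?lk m + 1) * (f (fst x) * g (snd x)))"
    unfolding fderiv_def fmul_eq_sum by (simp add: sum_distrib_left)
  also have "\<dots> = (\<Sum>x\<in>?S. (of_nat (?lk (fst x)) + of_nat (?lk (snd x))) * (f (fst x) * g (snd x)))"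
  proof (rule sum.cong[OF refl])
    fix x assume "x \<in> ?S"
    then have "?lk (fst x + snd x) = ?lk (m + monom1 v)" by simp
    then have "?lk (fst x) + ?lk (snd x) = ?lk m + 1" by (simp add: lookup_add)
    then have "(of_nat (?lk m + 1)::complex) = of_nat (?lk (fst x)) + of_nat (?lk (snd x))"
      by (metis of_nat_add)
    then show "of_nat (?lk m + 1) * (f (fst x) * g (snd x))
        = (of_nat (?lk (fst x)) + of_nat (?lk (snd x))) * (f (fst x) * g (snd x))"
      by simp
  qed
  finally show "fderiv v (fmul f g) m = fadd (fmul (fderiv v f) g) (fmul f (fderiv v g)) m"
    unfolding fadd_def left right by (simp add: distrib_right sum.distrib)
qed

lemma fmul_fadd_left: "fmul (fadd f g) h = fadd (fmul f h) (fmul g h)"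
  by (rule ext) (simp add: fmul_def fadd_def distrib_right sum.distrib)

lemma fmul_fadd_right: "fmul h (fadd f g) = fadd (fmul h f) (fmul h g)"
  by (rule ext) (simp add: fmul_def fadd_def distrib_left sum.distrib)

lemma fmul_fconst_right: "fmul f (fconst c) m = f m * c"
proof -
  have "fmul f (fconst c) m = (\<Sum>x\<in>splits m. if x = (m, 0) then f m * c else 0)"
    unfolding fmul_eq_sum by (rule sum.cong) (auto simp: fconst_def)
  then show ?thesis by (simp add: finite_splits)
qed

lemma fmul_fconst_left: "fmul (fconst c) f m = c * f m"
proof -
  have "fmul (fconst c) f m = (\<Sum>x\<in>splits m. if x = (0, m) then c * f m else 0)"
    unfolding fmul_eq_sum by (rule sum.cong) (auto simp: fconst_def)
  then show ?thesis by (simp add: finite_splits)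
qed

lemma fconst_0 [simp]: "fconst 0 m = 0"
  by (simp add: fconst_def)

lemma fderiv_fconst: "fderiv v (fconst c) = (\<lambda>m. 0)"
proof (rule ext)
  fix m
  have "Poly_Mapping.lookup (m + monom1 v) v \<noteq> 0" by (simp add: lookup_add)
  then have "m + monom1 v \<noteq> 0" by auto
  then show "fderiv v (fconst c) m = 0" by (simp add: fderiv_def fconst_def)
qed

lemma poly_mapping_add_eq_0: "(p::'a \<Rightarrow>\<^sub>0 nat) + q = 0 \<Longrightarrow> p = 0"
proof (rule poly_mapping_eqI)
  fix k assume "p + q = 0"
  then have "Poly_Mapping.lookup (p + q) k = 0" by simp
  then show "Poly_Mapping.lookup p k = Poly_Mapping.lookup 0 k" by (simp add: lookup_add)
qed

lemma splits_0: "splits (0::'a \<Rightarrow>\<^sub>0 nat) = {(0, 0)}"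
  using poly_mapping_add_eq_0 add.commute by fastforce

lemma fmul_at_0: "fmul f g 0 = f 0 * g 0"
  by (simp add: fmul_eq_sum splits_0)

lemma fps_eq_0_if_fderiv_eq_0:
  assumes "\<And>v. fderiv v f = (\<lambda>_. 0)" and "m \<noteq> 0"
  shows "f m = 0"
proof -
  from assms(2) obtain v where "v \<in> Poly_Mapping.keys m"
    by (metis all_not_in_conv keys_eq_empty)
  then have nz: "Poly_Mapping.lookup m v \<noteq> 0" by (simp add: in_keys_iff)
  have "of_nat (Poly_Mapping.lookup (m - monom1 v) v + 1) * f m = 0"
    using fun_cong[OF assms(1)[of v], of "m - monom1 v"]
    unfolding fderiv_def minus_monom1_add[OF nz] .
  moreover have "(of_nat (Poly_Mapping.lookup (m - monom1 v) v + 1)::complex) \<noteq> 0"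
    by (simp only: of_nat_eq_0_iff)
  ultimately show ?thesis by simp
qed

section \<open>Products of semi-infinite matrices\<close>

definition prod_finite :: "'d fmat \<Rightarrow> 'd fmat \<Rightarrow> bool" where
  "prod_finite A B \<longleftrightarrow>
     (\<forall>\<alpha> \<beta> m. finite {\<gamma>. \<exists>p q. p + q = m \<and> A \<alpha> \<gamma> p \<noteq> 0 \<and> B \<gamma> \<beta> q \<noteq> 0})"

definition row_finite :: "'d fmat \<Rightarrow> bool" where
  "row_finite A \<longleftrightarrow> (\<forall>\<alpha> m. finite {\<beta>. \<exists>p q. p + q = m \<and> A \<alpha> \<beta> p \<noteq> 0})"

definition col_finite :: "'d fmat \<Rightarrow> bool" where
  "col_finite A \<longleftrightarrow> (\<forall>\<beta> m. finite {\<alpha>. \<exists>p q. p + q = m \<and> A \<alpha> \<beta> p \<noteq> 0})"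

lemma row_finite_imp_prod_finite: "row_finite A \<Longrightarrow> prod_finite A B"
  unfolding prod_finite_def row_finite_def
proof (intro allI)
  fix \<alpha> \<beta> m assume "\<forall>\<alpha> m. finite {\<gamma>. \<exists>p q. p + q = m \<and> A \<alpha> \<gamma> p \<noteq> 0}"
  then have "finite {\<gamma>. \<exists>p q. p + q = m \<and> A \<alpha> \<gamma> p \<noteq> 0}" by blast
  then show "finite {\<gamma>. \<exists>p q. p + q = m \<and> A \<alpha> \<gamma> p \<noteq> 0 \<and> B \<gamma> \<beta> q \<noteq> 0}"
    by (rule rev_finite_subset) blast
qed

lemma col_finite_imp_prod_finite: "col_finite B \<Longrightarrow> prod_finite A B"
  unfolding prod_finite_def col_finite_def
proof (intro allI)
  fix \<alpha> \<beta> m assume "\<forall>\<beta> m. finite {\<alpha>. \<exists>p q. p + q = m \<and> B \<alpha> \<beta> p \<noteq> 0}"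
  then have "finite {\<gamma>. \<exists>p q. p + q = m \<and> B \<gamma> \<beta> p \<noteq> 0}" by blast
  moreover have "{\<gamma>. \<exists>p q. p + q = m \<and> A \<alpha> \<gamma> p \<noteq> 0 \<and> B \<gamma> \<beta> q \<noteq> 0}
      \<subseteq> {\<gamma>. \<exists>p q. p + q = m \<and> B \<gamma> \<beta> p \<noteq> 0}"
    by (blast intro: add.commute)
  ultimately show "finite {\<gamma>. \<exists>p q. p + q = m \<and> A \<alpha> \<gamma> p \<noteq> 0 \<and> B \<gamma> \<beta> q \<noteq> 0}"
    by (rule finite_subset[rotated])
qed

lemma col_finite_mtr: "col_finite (mtr A) \<longleftrightarrow> row_finite A"
  unfolding row_finite_def col_finite_def mtr_def by simp

lemma mmul_eq_sum:
  assumes "finite F"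
    and "\<And>\<gamma> p q. p + q = m \<Longrightarrow> A \<alpha> \<gamma> p \<noteq> 0 \<Longrightarrow> B \<gamma> \<beta> q \<noteq> 0 \<Longrightarrow> \<gamma> \<in> F"
  shows "mmul A B \<alpha> \<beta> m = (\<Sum>\<gamma>\<in>F. fmul (A \<alpha> \<gamma>) (B \<gamma> \<beta>) m)"
proof -
  have "mmul A B \<alpha> \<beta> m = infsum (\<lambda>\<gamma>. fmul (A \<alpha> \<gamma>) (B \<gamma> \<beta>) m) F"
    unfolding mmul_def
    apply (rule infsum_cong_neutral)
    apply (auto intro!: fmul_eq_0)
    using assms(2) by metis
  then show ?thesis using assms(1) by simp
qed

lemma mmul_nonzeroE:
  assumes "mmul A B \<alpha> \<beta> m \<noteq> 0"
  obtains \<gamma> p q where "p + q = m" "A \<alpha> \<gamma> p \<noteq> 0" "B \<gamma> \<beta> q \<noteq> 0"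
proof -
  have "\<exists>\<gamma>\<in>UNIV. fmul (A \<alpha> \<gamma>) (B \<gamma> \<beta>) m \<noteq> 0"
    using assms infsum_0[of UNIV "\<lambda>\<gamma>. fmul (A \<alpha> \<gamma>) (B \<gamma> \<beta>) m"] unfolding mmul_def by blast
  then obtain \<gamma> where "fmul (A \<alpha> \<gamma>) (B \<gamma> \<beta>) m \<noteq> 0" by blast
  then show ?thesis using fmul_eq_0 that by blast
qed

context
  fixes A B C :: "'d fmat" and \<alpha> \<beta> :: "'d mi" and m :: "'d tvar \<Rightarrow>\<^sub>0 nat"
    and \<Gamma> \<Delta> :: "'d mi set"
  assumes finite: "finite \<Gamma>" "finite \<Delta>"
    and covers: "\<And>\<gamma> \<delta> p q r. p + q + r = m \<Longrightarrow> A \<alpha> \<gamma> p \<noteq> 0 \<Longrightarrow> B \<gamma> \<delta> q \<noteq> 0 \<Longrightarrow>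
                   C \<delta> \<beta> r \<noteq> 0 \<Longrightarrow> \<gamma> \<in> \<Gamma> \<and> \<delta> \<in> \<Delta>"
begin

lemma mmul_mmul_left_eq_sum:
  "mmul (mmul A B) C \<alpha> \<beta> m = (\<Sum>\<delta>\<in>\<Delta>. \<Sum>\<gamma>\<in>\<Gamma>. \<Sum>x\<in>splits m. \<Sum>y\<in>splits (fst x).
      A \<alpha> \<gamma> (fst y) * B \<gamma> \<delta> (snd y) * C \<delta> \<beta> (snd x))"
proof -
  have "mmul (mmul A B) C \<alpha> \<beta> m = (\<Sum>\<delta>\<in>\<Delta>. fmul (mmul A B \<alpha> \<delta>) (C \<delta> \<beta>) m)"
  proof (rule mmul_eq_sum[OF finite(2)])
    fix \<delta> s r assume sr: "s + r = m" and ab: "mmul A B \<alpha> \<delta> s \<noteq> 0" and c: "C \<delta> \<beta> r \<noteq> 0"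
    obtain \<gamma> p q where "p + q = s" "A \<alpha> \<gamma> p \<noteq> 0" "B \<gamma> \<delta> q \<noteq> 0"
      using ab by (rule mmul_nonzeroE)
    then show "\<delta> \<in> \<Delta>" using covers[of p q r \<gamma> \<delta>] sr c by simp
  qed
  also have "\<dots> = (\<Sum>\<delta>\<in>\<Delta>. \<Sum>x\<in>splits m. \<Sum>\<gamma>\<in>\<Gamma>. \<Sum>y\<in>splits (fst x).
      A \<alpha> \<gamma> (fst y) * B \<gamma> \<delta> (snd y) * C \<delta> \<beta> (snd x))"
  proof (intro sum.cong refl, unfold fmul_eq_sum, rule sum.cong[OF refl])
    fix \<delta> x assume x: "x \<in> splits m"
    show "mmul A B \<alpha> \<delta> (fst x) * C \<delta> \<beta> (snd x) = (\<Sum>\<gamma>\<in>\<Gamma>. \<Sum>y\<in>splits (fst x).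
        A \<alpha> \<gamma> (fst y) * B \<gamma> \<delta> (snd y) * C \<delta> \<beta> (snd x))"
    proof (cases "C \<delta> \<beta> (snd x) = 0")
      case False
      have "mmul A B \<alpha> \<delta> (fst x) = (\<Sum>\<gamma>\<in>\<Gamma>. fmul (A \<alpha> \<gamma>) (B \<gamma> \<delta>) (fst x))"
      proof (rule mmul_eq_sum[OF finite(1)])
        fix \<gamma> p q assume "p + q = fst x" "A \<alpha> \<gamma> p \<noteq> 0" "B \<gamma> \<delta> q \<noteq> 0"
        then show "\<gamma> \<in> \<Gamma>" using covers[of p q "snd x" \<gamma> \<delta>] x False by simp
      qed
      then show ?thesis
        by (simp add: fmul_eq_sum sum_distrib_right)
    qed simp
  qed
  also have "\<dots> = (\<Sum>\<delta>\<in>\<Delta>. \<Sum>\<gamma>\<in>\<Gamma>. \<Sum>x\<in>splits m. \<Sum>y\<in>splits (fst x).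
      A \<alpha> \<gamma> (fst y) * B \<gamma> \<delta> (snd y) * C \<delta> \<beta> (snd x))"
    by (rule sum.cong[OF refl], rule sum.swap)
  finally show ?thesis .
qed

lemma mmul_mmul_right_eq_sum:
  "mmul A (mmul B C) \<alpha> \<beta> m = (\<Sum>\<gamma>\<in>\<Gamma>. \<Sum>\<delta>\<in>\<Delta>. \<Sum>x\<in>splits m. \<Sum>y\<in>splits (snd x).
      A \<alpha> \<gamma> (fst x) * B \<gamma> \<delta> (fst y) * C \<delta> \<beta> (snd y))"
proof -
  have "mmul A (mmul B C) \<alpha> \<beta> m = (\<Sum>\<gamma>\<in>\<Gamma>. fmul (A \<alpha> \<gamma>) (mmul B C \<gamma> \<beta>) m)"
  proof (rule mmul_eq_sum[OF finite(1)])
    fix \<gamma> p t assume pt: "p + t = m" and a: "A \<alpha> \<gamma> p \<noteq> 0" and bc: "mmul B C \<gamma> \<beta> t \<noteq> 0"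
    obtain \<delta> q r where "q + r = t" "B \<gamma> \<delta> q \<noteq> 0" "C \<delta> \<beta> r \<noteq> 0"
      using bc by (rule mmul_nonzeroE)
    then show "\<gamma> \<in> \<Gamma>" using covers[of p q r \<gamma> \<delta>] pt a by (simp add: add.assoc)
  qed
  also have "\<dots> = (\<Sum>\<gamma>\<in>\<Gamma>. \<Sum>x\<in>splits m. \<Sum>\<delta>\<in>\<Delta>. \<Sum>y\<in>splits (snd x).
      A \<alpha> \<gamma> (fst x) * B \<gamma> \<delta> (fst y) * C \<delta> \<beta> (snd y))"
  proof (intro sum.cong refl, unfold fmul_eq_sum, rule sum.cong[OF refl])
    fix \<gamma> x assume x: "x \<in> splits m"
    show "A \<alpha> \<gamma> (fst x) * mmul B C \<gamma> \<beta> (snd x) = (\<Sum>\<delta>\<in>\<Delta>. \<Sum>y\<in>splits (snd x).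
        A \<alpha> \<gamma> (fst x) * B \<gamma> \<delta> (fst y) * C \<delta> \<beta> (snd y))"
    proof (cases "A \<alpha> \<gamma> (fst x) = 0")
      case False
      have "mmul B C \<gamma> \<beta> (snd x) = (\<Sum>\<delta>\<in>\<Delta>. fmul (B \<gamma> \<delta>) (C \<delta> \<beta>) (snd x))"
      proof (rule mmul_eq_sum[OF finite(2)])
        fix \<delta> q r assume "q + r = snd x" "B \<gamma> \<delta> q \<noteq> 0" "C \<delta> \<beta> r \<noteq> 0"
        then show "\<delta> \<in> \<Delta>" using covers[of "fst x" q r \<gamma> \<delta>] x False by (simp add: add.assoc)
      qed
      then show ?thesis
        by (simp add: fmul_eq_sum sum_distrib_left mult.assoc)
    qed simp
  qed
  also have "\<dots> = (\<Sum>\<gamma>\<in>\<Gamma>. \<Sum>\<delta>\<in>\<Delta>. \<Sum>x\<in>splits m. \<Sum>y\<in>splits (snd x).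
      A \<alpha> \<gamma> (fst x) * B \<gamma> \<delta> (fst y) * C \<delta> \<beta> (snd y))"
    by (rule sum.cong[OF refl], rule sum.swap)
  finally show ?thesis .
qed

lemma mmul_assoc_at: "mmul (mmul A B) C \<alpha> \<beta> m = mmul A (mmul B C) \<alpha> \<beta> m"
proof -
  have "mmul (mmul A B) C \<alpha> \<beta> m = (\<Sum>\<delta>\<in>\<Delta>. \<Sum>\<gamma>\<in>\<Gamma>. \<Sum>x\<in>splits m. \<Sum>y\<in>splits (snd x).
      A \<alpha> \<gamma> (fst x) * B \<gamma> \<delta> (fst y) * C \<delta> \<beta> (snd y))"
    unfolding mmul_mmul_left_eq_sum
    by (intro sum.cong[OF refl] sum_splits_assoc[of "\<lambda>p q r. A \<alpha> _ p * B _ _ q * C _ \<beta> r"])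
  also have "\<dots> = mmul A (mmul B C) \<alpha> \<beta> m"
    unfolding mmul_mmul_right_eq_sum by (rule sum.swap)
  finally show ?thesis .
qed

end

lemma mmul_assoc:
  assumes "row_finite A" "row_finite B"
  shows "mmul (mmul A B) C = mmul A (mmul B C)"
proof (intro ext)
  fix \<alpha> \<beta> m
  define \<Gamma> where "\<Gamma> = {\<gamma>. \<exists>p q. p + q = m \<and> A \<alpha> \<gamma> p \<noteq> 0}"
  define \<Delta> where "\<Delta> = (\<Union>\<gamma>\<in>\<Gamma>. {\<delta>. \<exists>p q. p + q = m \<and> B \<gamma> \<delta> p \<noteq> 0})"
  have "finite \<Gamma>" "finite \<Delta>"
    using assms by (auto simp: row_finite_def \<Gamma>_def \<Delta>_def)
  then show "mmul (mmul A B) C \<alpha> \<beta> m = mmul A (mmul B C) \<alpha> \<beta> m"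
  proof (rule mmul_assoc_at)
    fix \<gamma> \<delta> p q r assume "p + q + r = m" "A \<alpha> \<gamma> p \<noteq> 0" "B \<gamma> \<delta> q \<noteq> 0"
    then have "p + (q + r) = m" "q + (p + r) = m"
      by (simp_all add: ac_simps)
    then show "\<gamma> \<in> \<Gamma> \<and> \<delta> \<in> \<Delta>"
      using \<open>A \<alpha> \<gamma> p \<noteq> 0\<close> \<open>B \<gamma> \<delta> q \<noteq> 0\<close> unfolding \<Gamma>_def \<Delta>_def by blast
  qed
qed

lemma mmul_assoc_col_finite:
  assumes "row_finite A" "col_finite C"
  shows "mmul (mmul A B) C = mmul A (mmul B C)"
proof (intro ext)
  fix \<alpha> \<beta> m
  define \<Gamma> where "\<Gamma> = {\<gamma>. \<exists>p q. p + q = m \<and> A \<alpha> \<gamma> p \<noteq> 0}"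
  define \<Delta> where "\<Delta> = {\<delta>. \<exists>p q. p + q = m \<and> C \<delta> \<beta> p \<noteq> 0}"
  have "finite \<Gamma>" "finite \<Delta>"
    using assms by (auto simp: row_finite_def col_finite_def \<Gamma>_def \<Delta>_def)
  then show "mmul (mmul A B) C \<alpha> \<beta> m = mmul A (mmul B C) \<alpha> \<beta> m"
  proof (rule mmul_assoc_at)
    fix \<gamma> \<delta> p q r assume "p + q + r = m" "A \<alpha> \<gamma> p \<noteq> 0" "C \<delta> \<beta> r \<noteq> 0"
    then have "p + (q + r) = m" "r + (p + q) = m"
      by (simp_all add: ac_simps)
    then have "\<gamma> \<in> \<Gamma>" "\<delta> \<in> \<Delta>"
      using \<open>A \<alpha> \<gamma> p \<noteq> 0\<close> \<open>C \<delta> \<beta> r \<noteq> 0\<close> unfolding \<Gamma>_def \<Delta>_def by blast+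
    then show "\<gamma> \<in> \<Gamma> \<and> \<delta> \<in> \<Delta>" ..
  qed
qed

definition mzero :: "'d fmat" where
  "mzero = (\<lambda>\<alpha> \<beta> m. 0)"

lemma mderiv_mmul:
  assumes "prod_finite A B"
  shows "mderiv v (mmul A B) = madd (mmul (mderiv v A) B) (mmul A (mderiv v B))"
proof (intro ext)
  fix \<alpha> \<beta> m
  define F where "F = {\<gamma>. \<exists>p q. p + q = m + monom1 v \<and> A \<alpha> \<gamma> p \<noteq> 0 \<and> B \<gamma> \<beta> q \<noteq> 0}"
  have fin: "finite F" using assms by (simp add: prod_finite_def F_def)
  have AB: "mmul A B \<alpha> \<beta> (m + monom1 v) = (\<Sum>\<gamma>\<in>F. fmul (A \<alpha> \<gamma>) (B \<gamma> \<beta>) (m + monom1 v))"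
    by (rule mmul_eq_sum[OF fin]) (auto simp: F_def)
  have dA_B: "mmul (mderiv v A) B \<alpha> \<beta> m = (\<Sum>\<gamma>\<in>F. fmul (mderiv v A \<alpha> \<gamma>) (B \<gamma> \<beta>) m)"
  proof (rule mmul_eq_sum[OF fin])
    fix \<gamma> p q assume "p + q = m" "mderiv v A \<alpha> \<gamma> p \<noteq> 0" "B \<gamma> \<beta> q \<noteq> 0"
    then have "p + monom1 v + q = m + monom1 v" "A \<alpha> \<gamma> (p + monom1 v) \<noteq> 0"
      by (auto simp: mderiv_def fderiv_def ac_simps)
    then show "\<gamma> \<in> F" using \<open>B \<gamma> \<beta> q \<noteq> 0\<close> unfolding F_def by blast
  qed
  have A_dB: "mmul A (mderiv v B) \<alpha> \<beta> m = (\<Sum>\<gamma>\<in>F. fmul (A \<alpha> \<gamma>) (mderiv v B \<gamma> \<beta>) m)"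
  proof (rule mmul_eq_sum[OF fin])
    fix \<gamma> p q assume "p + q = m" "A \<alpha> \<gamma> p \<noteq> 0" "mderiv v B \<gamma> \<beta> q \<noteq> 0"
    then have "p + (q + monom1 v) = m + monom1 v" "B \<gamma> \<beta> (q + monom1 v) \<noteq> 0"
      by (auto simp: mderiv_def fderiv_def ac_simps)
    then show "\<gamma> \<in> F" using \<open>A \<alpha> \<gamma> p \<noteq> 0\<close> unfolding F_def by blast
  qed
  have "mderiv v (mmul A B) \<alpha> \<beta> m = (\<Sum>\<gamma>\<in>F. fderiv v (fmul (A \<alpha> \<gamma>) (B \<gamma> \<beta>)) m)"
    unfolding mderiv_def fderiv_def AB by (simp add: sum_distrib_left)
  also have "\<dots> = madd (mmul (mderiv v A) B) (mmul A (mderiv v B)) \<alpha> \<beta> m"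
    unfolding madd_def fadd_def dA_B A_dB fderiv_fmul by (simp add: sum.distrib mderiv_def)
  finally show "mderiv v (mmul A B) \<alpha> \<beta> m = madd (mmul (mderiv v A) B) (mmul A (mderiv v B)) \<alpha> \<beta> m" .
qed

lemma mmul_madd_distrib_right:
  assumes "prod_finite A C" "prod_finite B C"
  shows "mmul (madd A B) C = madd (mmul A C) (mmul B C)"
proof (intro ext)
  fix \<alpha> \<beta> m
  define F where "F = {\<gamma>. \<exists>p q. p + q = m \<and> A \<alpha> \<gamma> p \<noteq> 0 \<and> C \<gamma> \<beta> q \<noteq> 0}
     \<union> {\<gamma>. \<exists>p q. p + q = m \<and> B \<alpha> \<gamma> p \<noteq> 0 \<and> C \<gamma> \<beta> q \<noteq> 0}"
  have fin: "finite F" using assms by (simp add: prod_finite_def F_def)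
  have "mmul (madd A B) C \<alpha> \<beta> m = (\<Sum>\<gamma>\<in>F. fmul (madd A B \<alpha> \<gamma>) (C \<gamma> \<beta>) m)"
  proof (rule mmul_eq_sum[OF fin])
    fix \<gamma> p q assume h: "p + q = m" "madd A B \<alpha> \<gamma> p \<noteq> 0" "C \<gamma> \<beta> q \<noteq> 0"
    then have "A \<alpha> \<gamma> p \<noteq> 0 \<or> B \<alpha> \<gamma> p \<noteq> 0" by (auto simp: madd_def fadd_def)
    then show "\<gamma> \<in> F" using h unfolding F_def by blast
  qed
  also have "\<dots> = (\<Sum>\<gamma>\<in>F. fmul (A \<alpha> \<gamma>) (C \<gamma> \<beta>) m) + (\<Sum>\<gamma>\<in>F. fmul (B \<alpha> \<gamma>) (C \<gamma> \<beta>) m)"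
    unfolding madd_def fmul_fadd_left by (simp add: fadd_def sum.distrib)
  also have "\<dots> = madd (mmul A C) (mmul B C) \<alpha> \<beta> m"
    unfolding madd_def fadd_def
    by (subst (1 2) mmul_eq_sum[OF fin]) (auto simp: F_def)
  finally show "mmul (madd A B) C \<alpha> \<beta> m = madd (mmul A C) (mmul B C) \<alpha> \<beta> m" .
qed

lemma mmul_madd_distrib_left:
  assumes "prod_finite C A" "prod_finite C B"
  shows "mmul C (madd A B) = madd (mmul C A) (mmul C B)"
proof (intro ext)
  fix \<alpha> \<beta> m
  define F where "F = {\<gamma>. \<exists>p q. p + q = m \<and> C \<alpha> \<gamma> p \<noteq> 0 \<and> A \<gamma> \<beta> q \<noteq> 0}
     \<union> {\<gamma>. \<exists>p q. p + q = m \<and> C \<alpha> \<gamma> p \<noteq> 0 \<and> B \<gamma> \<beta> q \<noteq> 0}"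
  have fin: "finite F" using assms by (simp add: prod_finite_def F_def)
  have "mmul C (madd A B) \<alpha> \<beta> m = (\<Sum>\<gamma>\<in>F. fmul (C \<alpha> \<gamma>) (madd A B \<gamma> \<beta>) m)"
  proof (rule mmul_eq_sum[OF fin])
    fix \<gamma> p q assume h: "p + q = m" "C \<alpha> \<gamma> p \<noteq> 0" "madd A B \<gamma> \<beta> q \<noteq> 0"
    then have "A \<gamma> \<beta> q \<noteq> 0 \<or> B \<gamma> \<beta> q \<noteq> 0" by (auto simp: madd_def fadd_def)
    then show "\<gamma> \<in> F" using h unfolding F_def by blast
  qed
  also have "\<dots> = (\<Sum>\<gamma>\<in>F. fmul (C \<alpha> \<gamma>) (A \<gamma> \<beta>) m) + (\<Sum>\<gamma>\<in>F. fmul (C \<alpha> \<gamma>) (B \<gamma> \<beta>) m)"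
    unfolding madd_def fmul_fadd_right by (simp add: fadd_def sum.distrib)
  also have "\<dots> = madd (mmul C A) (mmul C B) \<alpha> \<beta> m"
    unfolding madd_def fadd_def
    by (subst (1 2) mmul_eq_sum[OF fin]) (auto simp: F_def)
  finally show "mmul C (madd A B) \<alpha> \<beta> m = madd (mmul C A) (mmul C B) \<alpha> \<beta> m" .
qed

lemma mmul_mneg_left: "mmul (mneg A) B = mneg (mmul A B)"
  by (intro ext) (simp add: mmul_def mneg_def fmul_def sum_negf infsum_uminus)

lemma mmul_mneg_right: "mmul A (mneg B) = mneg (mmul A B)"
  by (intro ext) (simp add: mmul_def mneg_def fmul_def sum_negf infsum_uminus)

lemma mderiv_madd: "mderiv v (madd A B) = madd (mderiv v A) (mderiv v B)"
  by (intro ext) (simp add: mderiv_def madd_def fderiv_def fadd_def distrib_left)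

lemma madd_mzero: "madd A mzero = A"
  by (intro ext) (simp add: madd_def mzero_def fadd_def)

lemma madd_mneg_self: "madd A (mneg A) = mzero"
  by (intro ext) (simp add: madd_def mneg_def fadd_def mzero_def)

lemma mmul_mzero_left: "mmul mzero A = mzero"
  unfolding mmul_def mzero_def by (simp add: fmul_def)

lemma mmul_mzero_right: "mmul A mzero = mzero"
  unfolding mmul_def mzero_def by (simp add: fmul_def)

lemma mmul_mone_left: "mmul mone A = A"
proof (intro ext)
  fix \<alpha> \<beta> m
  have "mmul mone A \<alpha> \<beta> m = (\<Sum>\<gamma>\<in>{\<alpha>}. fmul (mone \<alpha> \<gamma>) (A \<gamma> \<beta>) m)"
    by (rule mmul_eq_sum) (auto simp: mone_def fconst_def split: if_splits)
  then show "mmul mone A \<alpha> \<beta> m = A \<alpha> \<beta> m" by (simp add: mone_def fmul_fconst_left)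
qed

lemma mmul_mone_right: "mmul A mone = A"
proof (intro ext)
  fix \<alpha> \<beta> m
  have "mmul A mone \<alpha> \<beta> m = (\<Sum>\<gamma>\<in>{\<beta>}. fmul (A \<alpha> \<gamma>) (mone \<gamma> \<beta>) m)"
    by (rule mmul_eq_sum) (auto simp: mone_def fconst_def split: if_splits)
  then show "mmul A mone \<alpha> \<beta> m = A \<alpha> \<beta> m" by (simp add: mone_def fmul_fconst_right)
qed

lemma mderiv_mone: "mderiv v mone = mzero"
  by (intro ext) (simp add: mderiv_def mone_def mzero_def fderiv_fconst)

lemma mmul_at_0:
  assumes "\<And>\<gamma>. A \<alpha> \<gamma> 0 \<noteq> 0 \<Longrightarrow> \<gamma> = \<alpha>"
  shows "mmul A B \<alpha> \<beta> 0 = A \<alpha> \<alpha> 0 * B \<alpha> \<beta> 0"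
proof -
  have "mmul A B \<alpha> \<beta> 0 = (\<Sum>\<gamma>\<in>{\<alpha>}. fmul (A \<alpha> \<gamma>) (B \<gamma> \<beta>) 0)"
  proof (rule mmul_eq_sum)
    fix \<gamma> p q assume "p + q = 0" "A \<alpha> \<gamma> p \<noteq> 0"
    then have "A \<alpha> \<gamma> 0 \<noteq> 0" using poly_mapping_add_eq_0 by metis
    then show "\<gamma> \<in> {\<alpha>}" using assms by blast
  qed simp
  then show ?thesis by (simp add: fmul_at_0)
qed

lemma eq_mone_if_mderiv_eq_mzero:
  assumes "\<And>v. mderiv v P = mzero" and "\<And>\<alpha> \<beta>. P \<alpha> \<beta> 0 = (if \<alpha> = \<beta> then 1 else 0)"
  shows "P = mone"
proof (intro ext)
  fix \<alpha> \<beta> m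
  show "P \<alpha> \<beta> m = mone \<alpha> \<beta> m"
  proof (cases "m = 0")
    case False
    have "fderiv v (P \<alpha> \<beta>) = (\<lambda>_. 0)" for v
      using fun_cong[OF fun_cong[OF assms(1)[of v], of \<alpha>], of \<beta>] by (simp add: mderiv_def mzero_def)
    then have "P \<alpha> \<beta> m = 0" using fps_eq_0_if_fderiv_eq_0 False by blast
    then show ?thesis using False by (simp add: mone_def fconst_def)
  qed (use assms(2) in \<open>simp add: mone_def fconst_def\<close>)
qed

lemma row_finite_mmul:
  assumes "row_finite A" "row_finite B"
  shows "row_finite (mmul A B)"
  unfolding row_finite_def
proof (intro allI)
  fix \<alpha> m
  define \<Gamma> where "\<Gamma> = {\<gamma>. \<exists>p q. p + q = m \<and> A \<alpha> \<gamma> p \<noteq> 0}"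
  define \<Delta> where "\<Delta> \<gamma> = {\<delta>. \<exists>p q. p + q = m \<and> B \<gamma> \<delta> p \<noteq> 0}" for \<gamma>
  have "{\<beta>. \<exists>s r. s + r = m \<and> mmul A B \<alpha> \<beta> s \<noteq> 0} \<subseteq> (\<Union>\<gamma>\<in>\<Gamma>. \<Delta> \<gamma>)"
  proof (rule subsetI, elim CollectE exE conjE)
    fix \<beta> s r assume sr: "s + r = m" and nz: "mmul A B \<alpha> \<beta> s \<noteq> 0"
    obtain \<gamma> p q where h: "p + q = s" "A \<alpha> \<gamma> p \<noteq> 0" "B \<gamma> \<beta> q \<noteq> 0"
      using nz by (rule mmul_nonzeroE)
    then have "p + (q + r) = m" "q + (p + r) = m"
      using sr by (auto simp: ac_simps)
    then have "\<gamma> \<in> \<Gamma>" "\<beta> \<in> \<Delta> \<gamma>"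
      unfolding \<Gamma>_def \<Delta>_def using h by blast+
    then show "\<beta> \<in> (\<Union>\<gamma>\<in>\<Gamma>. \<Delta> \<gamma>)" by blast
  qed
  moreover have "finite (\<Union>\<gamma>\<in>\<Gamma>. \<Delta> \<gamma>)"
    using assms by (simp add: row_finite_def \<Gamma>_def \<Delta>_def)
  ultimately show "finite {\<beta>. \<exists>s r. s + r = m \<and> mmul A B \<alpha> \<beta> s \<noteq> 0}"
    by (rule finite_subset)
qed

lemma row_finite_madd: "row_finite A \<Longrightarrow> row_finite B \<Longrightarrow> row_finite (madd A B)"
proof -
  assume "row_finite A" "row_finite B"
  moreover have "{\<beta>. \<exists>p q. p + q = m \<and> madd A B \<alpha> \<beta> p \<noteq> 0}
     \<subseteq> {\<beta>. \<exists>p q. p + q = m \<and> A \<alpha> \<beta> p \<noteq> 0} \<union> {\<beta>. \<exists>p q. p + q = m \<and> B \<alpha> \<beta> p \<noteq> 0}" for \<alpha> m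
    by (auto simp: madd_def fadd_def) (metis add_cancel_right_left)
  ultimately show ?thesis unfolding row_finite_def by (meson finite_Un finite_subset)
qed

lemma row_finite_mneg: "row_finite A \<Longrightarrow> row_finite (mneg A)"
  unfolding row_finite_def mneg_def by simp

lemma row_finite_mderiv: "row_finite A \<Longrightarrow> row_finite (mderiv v A)"
proof -
  assume "row_finite A"
  moreover have "{\<beta>. \<exists>p q. p + q = m \<and> mderiv v A \<alpha> \<beta> p \<noteq> 0}
     \<subseteq> {\<beta>. \<exists>p q. p + q = m + monom1 v \<and> A \<alpha> \<beta> p \<noteq> 0}" for \<alpha> m
  proof (rule subsetI, elim CollectE exE conjE)
    fix \<beta> p q assume "p + q = m" "mderiv v A \<alpha> \<beta> p \<noteq> 0"
    then have "p + monom1 v + q = m + monom1 v" "A \<alpha> \<beta> (p + monom1 v) \<noteq> 0"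
      by (auto simp: mderiv_def fderiv_def ac_simps)
    then show "\<beta> \<in> {\<beta>. \<exists>p q. p + q = m + monom1 v \<and> A \<alpha> \<beta> p \<noteq> 0}" by blast
  qed
  ultimately show ?thesis unfolding row_finite_def by (meson finite_subset)
qed

section \<open>Block structure\<close>

lemma mi_component_le_len: "\<alpha> i \<le> mi_len (\<alpha>::('d::finite) mi)"
  unfolding mi_len_def by (rule member_le_sum) auto

lemma finite_mi_len_le: "finite {\<alpha>::('d::finite) mi. mi_len \<alpha> \<le> n}"
proof (rule finite_subset)
  show "{\<alpha>::'d mi. mi_len \<alpha> \<le> n} \<subseteq> {f. \<forall>x. (x \<in> UNIV \<longrightarrow> f x \<in> {..n}) \<and> (x \<notin> UNIV \<longrightarrow> f x = 0)}"
    using mi_component_le_len order_trans by fastforce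
qed (rule finite_set_of_finite_funs; simp)

lemma mi_len_add [simp]: "mi_len (mi_add \<alpha> \<beta>) = mi_len \<alpha> + mi_len (\<beta>::('d::finite) mi)"
  by (simp add: mi_len_def mi_add_def sum.distrib)

lemma mi_len_e [simp]: "mi_len (mi_e a :: ('d::finite) mi) = 1"
  by (simp add: mi_len_def mi_e_def)

lemma mi_add_cancel: "mi_add \<alpha> \<gamma> = mi_add \<beta> \<gamma> \<longleftrightarrow> \<alpha> = \<beta>"
  by (auto simp: mi_add_def fun_eq_iff)

lemma mi_add_commute: "mi_add \<alpha> \<beta> = mi_add \<beta> \<alpha>"
  by (auto simp: mi_add_def fun_eq_iff)

lemma mi_add_assoc: "mi_add (mi_add \<alpha> \<beta>) \<gamma> = mi_add \<alpha> (mi_add \<beta> \<gamma>)"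
  by (auto simp: mi_add_def fun_eq_iff)

definition upper_band :: "('d::finite) fmat \<Rightarrow> nat \<Rightarrow> bool" where
  "upper_band A k \<longleftrightarrow> (\<forall>\<alpha> \<beta> p. A \<alpha> \<beta> p \<noteq> 0 \<longrightarrow> mi_len \<beta> \<le> mi_len \<alpha> + k)"

definition block_upper :: "('d::finite) fmat \<Rightarrow> bool" where
  "block_upper X \<longleftrightarrow> (\<forall>\<alpha> \<beta> p. mi_len \<beta> < mi_len \<alpha> \<longrightarrow> X \<alpha> \<beta> p = 0)"

lemma upper_band_imp_row_finite: "upper_band A k \<Longrightarrow> row_finite A"
  unfolding row_finite_def
proof (intro allI)
  fix \<alpha> m assume "upper_band A k"
  then have "{\<beta>. \<exists>p q. p + q = m \<and> A \<alpha> \<beta> p \<noteq> 0} \<subseteq> {\<beta>. mi_len \<beta> \<le> mi_len \<alpha> + k}"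
    unfolding upper_band_def by blast
  then show "finite {\<beta>. \<exists>p q. p + q = m \<and> A \<alpha> \<beta> p \<noteq> 0}"
    by (rule finite_subset) (rule finite_mi_len_le)
qed

lemma upper_band_mmul: "upper_band A k \<Longrightarrow> upper_band B l \<Longrightarrow> upper_band (mmul A B) (k + l)"
  unfolding upper_band_def
proof (intro allI impI)
  fix \<alpha> \<beta> p assume A: "\<forall>\<alpha> \<beta> p. A \<alpha> \<beta> p \<noteq> 0 \<longrightarrow> mi_len \<beta> \<le> mi_len \<alpha> + k"
    and B: "\<forall>\<alpha> \<beta> p. B \<alpha> \<beta> p \<noteq> 0 \<longrightarrow> mi_len \<beta> \<le> mi_len \<alpha> + l"
    and "mmul A B \<alpha> \<beta> p \<noteq> 0"
  then obtain \<gamma> q r where "A \<alpha> \<gamma> q \<noteq> 0" "B \<gamma> \<beta> r \<noteq> 0"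
    by (blast elim: mmul_nonzeroE)
  then have "mi_len \<gamma> \<le> mi_len \<alpha> + k" "mi_len \<beta> \<le> mi_len \<gamma> + l"
    using A B by blast+
  then show "mi_len \<beta> \<le> mi_len \<alpha> + (k + l)" by linarith
qed

lemma upper_band_madd: "upper_band A k \<Longrightarrow> upper_band B k \<Longrightarrow> upper_band (madd A B) k"
  unfolding upper_band_def madd_def fadd_def
  by (metis (no_types, lifting) add.right_neutral)

lemma upper_band_mderiv: "upper_band A k \<Longrightarrow> upper_band (mderiv v A) k"
  unfolding upper_band_def mderiv_def fderiv_def by (metis mult_zero_right)

lemma upper_band_mono: "upper_band A k \<Longrightarrow> k \<le> l \<Longrightarrow> upper_band A l"
  unfolding upper_band_def by (meson add_le_mono le_refl order_trans)

lemma block_upper_madd: "block_upper A \<Longrightarrow> block_upper B \<Longrightarrow> block_upper (madd A B)"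
  unfolding block_upper_def madd_def fadd_def by simp

lemma block_upper_mneg: "block_upper A \<Longrightarrow> block_upper (mneg A)"
  unfolding block_upper_def mneg_def by simp

lemma block_upper_mderiv: "block_upper X \<Longrightarrow> block_upper (mderiv v X)"
  unfolding block_upper_def mderiv_def fderiv_def by simp

lemma block_upper_mmul:
  fixes A B :: "('d::finite) fmat"
  assumes "block_upper A" "block_upper B"
  shows "block_upper (mmul A B)"
  unfolding block_upper_def
proof (intro allI impI)
  fix \<alpha> \<beta> :: "'d mi" and p assume lt: "mi_len \<beta> < mi_len \<alpha>"
  show "mmul A B \<alpha> \<beta> p = 0"
  proof (rule ccontr)
    assume "mmul A B \<alpha> \<beta> p \<noteq> 0"
    then obtain \<gamma> q r where "A \<alpha> \<gamma> q \<noteq> 0" "B \<gamma> \<beta> r \<noteq> 0"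
      by (rule mmul_nonzeroE)
    then have "\<not> mi_len \<gamma> < mi_len \<alpha>" "\<not> mi_len \<beta> < mi_len \<gamma>"
      using assms unfolding block_upper_def by blast+
    then show False using lt by simp
  qed
qed

lemma block_diagonal_nonzero: "block_diagonal H \<Longrightarrow> H \<alpha> \<beta> p \<noteq> 0 \<Longrightarrow> mi_len \<beta> = mi_len \<alpha>"
  unfolding block_diagonal_def by (metis fconst_0)

lemma block_diagonal_upper_band: "block_diagonal H \<Longrightarrow> upper_band H 0"
  unfolding upper_band_def using block_diagonal_nonzero by fastforce

lemma block_lower_unitriangular_upper_band: "block_lower_unitriangular S \<Longrightarrow> upper_band S 0"
  unfolding block_lower_unitriangular_def upper_band_def
  by (metis add.right_neutral fconst_0 not_le_imp_less)

lemma block_lower_unitriangular_row_finite: "block_lower_unitriangular S \<Longrightarrow> row_finite S"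
  by (rule upper_band_imp_row_finite[OF block_lower_unitriangular_upper_band])

lemma Lam_eq_LamPow: "Lam a = LamPow (mi_e a)"
  by (simp add: Lam_def LamPow_def)

lemma upper_band_LamPow: "upper_band (LamPow \<gamma>) (mi_len \<gamma>)"
  unfolding upper_band_def
proof (intro allI impI)
  fix \<alpha> \<beta> p assume "LamPow \<gamma> \<alpha> \<beta> p \<noteq> 0"
  then have "\<beta> = mi_add \<alpha> \<gamma>"
    by (simp add: LamPow_def fconst_def split: if_splits)
  then show "mi_len \<beta> \<le> mi_len \<alpha> + mi_len \<gamma>" by simp
qed

lemma row_finite_LamPow: "row_finite (LamPow \<gamma>)"
  unfolding row_finite_def
proof (intro allI)
  fix \<alpha> m
  have "{\<beta>. \<exists>p q. p + q = m \<and> LamPow \<gamma> \<alpha> \<beta> p \<noteq> 0} \<subseteq> {mi_add \<alpha> \<gamma>}"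
    by (auto simp: LamPow_def fconst_def split: if_splits)
  then show "finite {\<beta>. \<exists>p q. p + q = m \<and> LamPow \<gamma> \<alpha> \<beta> p \<noteq> 0}"
    by (rule finite_subset) simp
qed

lemma LamPow_mmul: "mmul (LamPow \<gamma>) A \<alpha> \<beta> m = A (mi_add \<alpha> \<gamma>) \<beta> m"
proof -
  have "mmul (LamPow \<gamma>) A \<alpha> \<beta> m = (\<Sum>\<delta>\<in>{mi_add \<alpha> \<gamma>}. fmul (LamPow \<gamma> \<alpha> \<delta>) (A \<delta> \<beta>) m)"
    by (rule mmul_eq_sum) (auto simp: LamPow_def fconst_def split: if_splits)
  then show ?thesis by (simp add: LamPow_def fmul_fconst_left)
qed

lemma mmul_LamPow: "mmul A (LamPow \<gamma>) \<alpha> (mi_add \<delta> \<gamma>) m = A \<alpha> \<delta> m"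
proof -
  have "mmul A (LamPow \<gamma>) \<alpha> (mi_add \<delta> \<gamma>) m
      = (\<Sum>\<delta>'\<in>{\<delta>}. fmul (A \<alpha> \<delta>') (LamPow \<gamma> \<delta>' (mi_add \<delta> \<gamma>)) m)"
    by (rule mmul_eq_sum) (auto simp: LamPow_def fconst_def mi_add_cancel split: if_splits)
  then show ?thesis by (simp add: LamPow_def fmul_fconst_right)
qed

lemma mmul_LamPow_eq_0:
  assumes "\<And>\<delta>. \<beta> \<noteq> mi_add \<delta> \<gamma>"
  shows "mmul A (LamPow \<gamma>) \<alpha> \<beta> m = 0"
proof -
  have "mmul A (LamPow \<gamma>) \<alpha> \<beta> m = (\<Sum>\<delta>\<in>{}. fmul (A \<alpha> \<delta>) (LamPow \<gamma> \<delta> \<beta>) m)"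
    by (rule mmul_eq_sum) (use assms in \<open>auto simp: LamPow_def fconst_def split: if_splits\<close>)
  then show ?thesis by simp
qed

lemma mmul_LamPow_scalar:
  assumes "\<And>\<alpha> \<beta>. X \<alpha> \<beta> m = c * Y \<alpha> \<beta> m"
  shows "mmul X (LamPow g) \<alpha> \<beta> m = c * mmul Y (LamPow g) \<alpha> \<beta> m"
proof (cases "\<exists>\<delta>. \<beta> = mi_add \<delta> g")
  case True
  then obtain \<delta> where "\<beta> = mi_add \<delta> g" by blast
  then show ?thesis using assms by (simp add: mmul_LamPow)
qed (simp add: mmul_LamPow_eq_0)

lemma LamPow_mmul_LamPow: "mmul (LamPow g) (LamPow h) = LamPow (mi_add g h)"
  by (intro ext, unfold LamPow_mmul) (simp add: LamPow_def mi_add_assoc)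

lemma mderiv_LamPow: "mderiv v (LamPow g) = mzero"
  by (intro ext) (simp add: mderiv_def LamPow_def mzero_def fderiv_fconst)

text \<open>Forward substitution, block row by block row.\<close>
function lower_inverse :: "('d::finite) fmat \<Rightarrow> 'd mi \<Rightarrow> 'd mi \<Rightarrow> 'd fps" where
  "lower_inverse S \<alpha> \<beta> =
     (if mi_len \<alpha> < mi_len \<beta> then fconst 0
      else if mi_len \<alpha> = mi_len \<beta> then fconst (if \<alpha> = \<beta> then 1 else 0)
      else (\<lambda>m. - (\<Sum>\<gamma>\<in>{\<gamma>. mi_len \<beta> \<le> mi_len \<gamma> \<and> mi_len \<gamma> < mi_len \<alpha>}.
                        fmul (S \<alpha> \<gamma>) (lower_inverse S \<gamma> \<beta>) m)))"
  by pat_completeness auto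
termination by (relation "Wellfounded.measure (\<lambda>(S, \<alpha>, \<beta>). mi_len \<alpha>)") auto

declare lower_inverse.simps [simp del]

lemma block_lower_unitriangular_lower_inverse: "block_lower_unitriangular (lower_inverse S)"
  unfolding block_lower_unitriangular_def by (auto simp: lower_inverse.simps)

lemma mmul_lower_inverse_eq_sum:
  fixes S :: "('d::finite) fmat"
  assumes S: "block_lower_unitriangular S" and le: "mi_len \<beta> \<le> mi_len \<alpha>"
  shows "mmul S (lower_inverse S) \<alpha> \<beta> m = lower_inverse S \<alpha> \<beta> m
    + (\<Sum>\<gamma>\<in>{\<gamma>. mi_len \<beta> \<le> mi_len \<gamma> \<and> mi_len \<gamma> < mi_len \<alpha>}. fmul (S \<alpha> \<gamma>) (lower_inverse S \<gamma> \<beta>) m)"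
proof -
  let ?B = "lower_inverse S"
  define F1 where "F1 = {\<gamma>::'d mi. mi_len \<beta> \<le> mi_len \<gamma> \<and> mi_len \<gamma> < mi_len \<alpha>}"
  define F2 where "F2 = {\<gamma>::'d mi. mi_len \<gamma> = mi_len \<alpha> \<and> \<gamma> \<noteq> \<alpha>}"
  have fin: "finite F1" "finite F2"
    unfolding F1_def F2_def
    by (rule finite_subset[OF _ finite_mi_len_le[of "mi_len \<alpha>"]], force)+
  have S_diag: "S \<alpha> \<gamma> = fconst (if \<alpha> = \<gamma> then 1 else 0)" if "mi_len \<gamma> = mi_len \<alpha>" for \<gamma>
    using S that unfolding block_lower_unitriangular_def by simp
  have "mmul S ?B \<alpha> \<beta> m = (\<Sum>\<gamma>\<in>insert \<alpha> (F1 \<union> F2). fmul (S \<alpha> \<gamma>) (?B \<gamma> \<beta>) m)"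
  proof (rule mmul_eq_sum)
    fix \<gamma> p q assume "S \<alpha> \<gamma> p \<noteq> 0" "?B \<gamma> \<beta> q \<noteq> 0"
    moreover have "S \<alpha> \<gamma> p = 0" if "mi_len \<alpha> < mi_len \<gamma>"
      using S that unfolding block_lower_unitriangular_def by simp
    moreover have "?B \<gamma> \<beta> q = 0" if "mi_len \<gamma> < mi_len \<beta>"
      using that by (simp add: lower_inverse.simps)
    ultimately show "\<gamma> \<in> insert \<alpha> (F1 \<union> F2)"
      unfolding F1_def F2_def by (auto simp: not_less[symmetric])
  qed (use fin in simp)
  also have "\<dots> = fmul (S \<alpha> \<alpha>) (?B \<alpha> \<beta>) m + (\<Sum>\<gamma>\<in>F1 \<union> F2. fmul (S \<alpha> \<gamma>) (?B \<gamma> \<beta>) m)"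
    using fin by (subst sum.insert) (auto simp: F1_def F2_def)
  also have "(\<Sum>\<gamma>\<in>F2. fmul (S \<alpha> \<gamma>) (?B \<gamma> \<beta>) m) = 0"
    by (rule sum.neutral) (auto simp: F2_def S_diag fmul_fconst_left)
  then have "(\<Sum>\<gamma>\<in>F1 \<union> F2. fmul (S \<alpha> \<gamma>) (?B \<gamma> \<beta>) m) = (\<Sum>\<gamma>\<in>F1. fmul (S \<alpha> \<gamma>) (?B \<gamma> \<beta>) m)"
    using fin by (subst sum.union_disjoint) (auto simp: F1_def F2_def)
  finally show ?thesis
    by (simp add: S_diag fmul_fconst_left F1_def)
qed

lemma mmul_lower_inverse:
  fixes S :: "('d::finite) fmat"
  assumes S: "block_lower_unitriangular S"
  shows "mmul S (lower_inverse S) = mone"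
proof (intro ext)
  fix \<alpha> \<beta> :: "'d mi" and m
  consider "mi_len \<alpha> < mi_len \<beta>" | "mi_len \<alpha> = mi_len \<beta>" | "mi_len \<beta> < mi_len \<alpha>"
    by linarith
  then show "mmul S (lower_inverse S) \<alpha> \<beta> m = mone \<alpha> \<beta> m"
  proof cases
    case 1
    have "mmul S (lower_inverse S) \<alpha> \<beta> m = 0"
    proof (rule ccontr)
      assume "mmul S (lower_inverse S) \<alpha> \<beta> m \<noteq> 0"
      then obtain \<gamma> p q where "S \<alpha> \<gamma> p \<noteq> 0" and B: "lower_inverse S \<gamma> \<beta> q \<noteq> 0"
        by (rule mmul_nonzeroE)
      then have "mi_len \<gamma> < mi_len \<beta>"
        using 1 block_lower_unitriangular_upper_band[OF S] unfolding upper_band_def by fastforce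
      then show False
        using B by (simp add: lower_inverse.simps)
    qed
    then show ?thesis using 1 by (auto simp: mone_def fconst_def)
  next
    case 2
    then show ?thesis
      by (simp add: mmul_lower_inverse_eq_sum[OF S] lower_inverse.simps mone_def fmul_fconst_right)
  next
    case 3
    then have "lower_inverse S \<alpha> \<beta> m = - (\<Sum>\<gamma>\<in>{\<gamma>. mi_len \<beta> \<le> mi_len \<gamma> \<and> mi_len \<gamma> < mi_len \<alpha>}.
        fmul (S \<alpha> \<gamma>) (lower_inverse S \<gamma> \<beta>) m)"
      by (subst lower_inverse.simps) simp
    moreover have "\<alpha> \<noteq> \<beta>" using 3 by auto
    ultimately show ?thesis
      using 3 by (simp add: mmul_lower_inverse_eq_sum[OF S] mone_def fconst_def)
  qed
qed

lemma minv_eqI: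
  assumes "row_finite A" "row_finite B" "mmul A B = mone" "mmul B A = mone"
  shows "minv A = B"
  unfolding minv_def
proof (rule the_equality)
  fix C assume C: "mmul A C = mone \<and> mmul C A = mone"
  have "C = mmul (mmul B A) C"
    using assms(4) by (simp add: mmul_mone_left)
  also have "\<dots> = B"
    using C by (simp add: mmul_assoc[OF assms(2,1)] mmul_mone_right)
  finally show "C = B" .
qed (use assms in simp)

lemma block_lower_unitriangular_minv:
  fixes S :: "('d::finite) fmat"
  assumes S: "block_lower_unitriangular S"
  shows "mmul S (minv S) = mone" "mmul (minv S) S = mone"
    "block_lower_unitriangular (minv S)"
proof -
  let ?B = "lower_inverse S"
  have rf: "row_finite S" "row_finite ?B"
    using S block_lower_unitriangular_lower_inverse block_lower_unitriangular_row_finite by blast+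
  have SB: "mmul S ?B = mone"
    by (rule mmul_lower_inverse[OF S])
  have BC: "mmul ?B (lower_inverse ?B) = mone"
    by (rule mmul_lower_inverse[OF block_lower_unitriangular_lower_inverse])
  have "S = mmul (mmul S ?B) (lower_inverse ?B)"
    by (simp add: mmul_assoc[OF rf] BC mmul_mone_right)
  then have BS: "mmul ?B S = mone"
    using SB BC by (simp add: mmul_mone_left)
  have "minv S = ?B"
    by (rule minv_eqI[OF rf SB BS])
  then show "mmul S (minv S) = mone" "mmul (minv S) S = mone"
    "block_lower_unitriangular (minv S)"
    using SB BS block_lower_unitriangular_lower_inverse by simp_all
qed

section \<open>The vacuum wave matrices\<close>

definition weight :: "('a \<Rightarrow> nat) \<Rightarrow> ('a \<Rightarrow>\<^sub>0 nat) \<Rightarrow> nat" where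
  "weight w m = (\<Sum>v\<in>Poly_Mapping.keys m. Poly_Mapping.lookup m v * w v)"

abbreviation (input) degree :: "('a \<Rightarrow>\<^sub>0 nat) \<Rightarrow> nat" where
  "degree \<equiv> weight (\<lambda>_. 1)"

lemma weight_eq_sum_superset:
  assumes "finite K" "Poly_Mapping.keys m \<subseteq> K"
  shows "weight w m = (\<Sum>v\<in>K. Poly_Mapping.lookup m v * w v)"
  unfolding weight_def
  by (rule sum.mono_neutral_left) (use assms in \<open>auto simp: in_keys_iff\<close>)

lemma weight_add: "weight w (p + q) = weight w p + weight w q"
proof -
  let ?K = "Poly_Mapping.keys p \<union> Poly_Mapping.keys q"
  have fin: "finite ?K" by simp
  have "weight w (p + q) = (\<Sum>v\<in>?K. Poly_Mapping.lookup (p + q) v * w v)"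
    by (rule weight_eq_sum_superset[OF fin keys_add])
  also have "\<dots> = (\<Sum>v\<in>?K. Poly_Mapping.lookup p v * w v) + (\<Sum>v\<in>?K. Poly_Mapping.lookup q v * w v)"
    by (simp add: lookup_add distrib_right sum.distrib)
  also have "\<dots> = weight w p + weight w q"
    by (simp add: weight_eq_sum_superset[OF fin])
  finally show ?thesis .
qed

lemma weight_monom1 [simp]: "weight w (Poly_Mapping.single v (Suc 0)) = w v"
  by (simp add: weight_def)

lemma weight_0 [simp]: "weight w 0 = 0"
  by (simp add: weight_def)

lemma weight_le_add: "p + q = m \<Longrightarrow> weight w p \<le> weight w m"
  using weight_add[of w p q] by simp

lemma degree_add_monom1: "degree (m + monom1 v) = Suc (degree m)"
  by (simp add: weight_add)

definition time_weight :: "('d::finite) tvar \<Rightarrow> nat" where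
  "time_weight v = (case v of T1 \<gamma> \<Rightarrow> mi_len \<gamma> | T2 \<gamma> \<Rightarrow> mi_len \<gamma>)"

lemma row_finite_if_weight_bound:
  fixes X :: "('d::finite) fmat"
  assumes "\<And>\<alpha> \<beta> m. X \<alpha> \<beta> m \<noteq> 0 \<Longrightarrow> mi_len \<beta> \<le> mi_len \<alpha> + weight time_weight m"
  shows "row_finite X"
  unfolding row_finite_def
proof (intro allI)
  fix \<alpha> m
  have "{\<beta>. \<exists>p q. p + q = m \<and> X \<alpha> \<beta> p \<noteq> 0} \<subseteq> {\<beta>. mi_len \<beta> \<le> mi_len \<alpha> + weight time_weight m}"
    using assms weight_le_add by (blast intro: order_trans add_left_mono)
  then show "finite {\<beta>. \<exists>p q. p + q = m \<and> X \<alpha> \<beta> p \<noteq> 0}"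
    by (rule finite_subset) (rule finite_mi_len_le)
qed

definition W0_exponent :: "('d mi \<Rightarrow> 'd tvar) \<Rightarrow> 'd fmat" where
  "W0_exponent tc = (\<lambda>\<alpha> \<beta> m. infsum (\<lambda>\<gamma>. fmul (fvar (tc \<gamma>)) (LamPow \<gamma> \<alpha> \<beta>) m) UNIV)"

text \<open>The vacuum wave matrix at reversed times t \<mapsto> -t: the coefficient of a monomial of
  total degree d changes by the sign (-1)^d.\<close>
definition W0_inv :: "('d mi \<Rightarrow> 'd tvar) \<Rightarrow> 'd fmat" where
  "W0_inv tc = (\<lambda>\<alpha> \<beta> m. (-1) ^ degree m * W0 tc \<alpha> \<beta> m)"

definition msmult :: "complex \<Rightarrow> 'd fmat \<Rightarrow> 'd fmat" where
  "msmult c A = (\<lambda>\<alpha> \<beta> m. c * A \<alpha> \<beta> m)"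

lemma mmul_msmult_right: "mmul A (msmult c X) = msmult c (mmul A X)"
  by (intro ext)
     (simp add: mmul_def msmult_def fmul_def sum_distrib_left ac_simps infsum_cmult_right'[symmetric])

lemma W0_exponent_at: "W0_exponent tc \<alpha> (mi_add \<alpha> \<gamma>) m = fvar (tc \<gamma>) m"
proof -
  have "W0_exponent tc \<alpha> (mi_add \<alpha> \<gamma>) m
      = infsum (\<lambda>\<gamma>'. fmul (fvar (tc \<gamma>')) (LamPow \<gamma>' \<alpha> (mi_add \<alpha> \<gamma>)) m) {\<gamma>}"
    unfolding W0_exponent_def
    by (rule infsum_cong_neutral)
       (auto simp: LamPow_def fmul_fconst_right mi_add_def fun_eq_iff)
  then show ?thesis by (simp add: LamPow_def fmul_fconst_right)
qed

lemma W0_exponent_nonzero: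
  assumes "W0_exponent tc \<alpha> \<beta> m \<noteq> 0"
  shows "\<exists>\<gamma>. \<beta> = mi_add \<alpha> \<gamma> \<and> m = monom1 (tc \<gamma>)"
proof -
  have "\<exists>\<gamma>. \<beta> = mi_add \<alpha> \<gamma>"
  proof (rule ccontr)
    assume no: "\<not> (\<exists>\<gamma>. \<beta> = mi_add \<alpha> \<gamma>)"
    have "W0_exponent tc \<alpha> \<beta> m = infsum (\<lambda>\<gamma>. fmul (fvar (tc \<gamma>)) (LamPow \<gamma> \<alpha> \<beta>) m) {}"
      unfolding W0_exponent_def
      by (rule infsum_cong_neutral) (use no in \<open>auto simp: LamPow_def fmul_fconst_right\<close>)
    then show False using assms by simp
  qed
  then obtain \<gamma> where \<gamma>: "\<beta> = mi_add \<alpha> \<gamma>" by blast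
  then have "fvar (tc \<gamma>) m \<noteq> 0" using assms W0_exponent_at by metis
  then show ?thesis using \<gamma> by (auto simp: fvar_def split: if_splits)
qed

lemma W0_exponent_mmul_LamPow_commute:
  "mmul (W0_exponent tc) (LamPow g) = mmul (LamPow g) (W0_exponent tc)"
proof (intro ext)
  fix \<alpha> \<beta> m
  show "mmul (W0_exponent tc) (LamPow g) \<alpha> \<beta> m = mmul (LamPow g) (W0_exponent tc) \<alpha> \<beta> m"
    unfolding LamPow_mmul
  proof (cases "\<exists>\<gamma>. \<beta> = mi_add (mi_add \<alpha> \<gamma>) g")
    case True
    then obtain \<gamma> where \<beta>: "\<beta> = mi_add (mi_add \<alpha> \<gamma>) g" by blast
    have "mmul (W0_exponent tc) (LamPow g) \<alpha> \<beta> m = fvar (tc \<gamma>) m"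
      unfolding \<beta> mmul_LamPow W0_exponent_at ..
    also have "\<dots> = W0_exponent tc (mi_add \<alpha> g) (mi_add (mi_add \<alpha> g) \<gamma>) m"
      by (rule W0_exponent_at[symmetric])
    finally show "mmul (W0_exponent tc) (LamPow g) \<alpha> \<beta> m = W0_exponent tc (mi_add \<alpha> g) \<beta> m"
      unfolding \<beta> by (metis mi_add_assoc mi_add_commute)
  next
    case False
    have "W0_exponent tc (mi_add \<alpha> g) \<beta> m = 0"
      using False W0_exponent_nonzero by (metis mi_add_assoc mi_add_commute)
    moreover have "mmul (W0_exponent tc) (LamPow g) \<alpha> \<beta> m = 0"
    proof (cases "\<exists>\<delta>. \<beta> = mi_add \<delta> g")
      case True
      then obtain \<delta> where "\<beta> = mi_add \<delta> g" by blast
      moreover have "W0_exponent tc \<alpha> \<delta> m = 0"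
        using False W0_exponent_nonzero calculation by blast
      ultimately show ?thesis by (simp add: mmul_LamPow)
    qed (use mmul_LamPow_eq_0 in blast)
    ultimately show "mmul (W0_exponent tc) (LamPow g) \<alpha> \<beta> m = W0_exponent tc (mi_add \<alpha> g) \<beta> m"
      by simp
  qed
qed

locale time_labelling =
  fixes tc :: "('d::finite) mi \<Rightarrow> 'd tvar"
  assumes time_weight_tc: "\<And>\<gamma>. time_weight (tc \<gamma>) = mi_len \<gamma>"
    and inj_tc: "inj tc"
begin

abbreviation (input) "A \<equiv> W0_exponent tc"

lemma mpow_nonzero:
  "mpow A n \<alpha> \<beta> m \<noteq> 0 \<Longrightarrow>
     degree m = n \<and> mi_len \<beta> = mi_len \<alpha> + weight time_weight m \<and> Poly_Mapping.keys m \<subseteq> range tc"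
proof (induction n arbitrary: \<alpha> \<beta> m)
  case 0
  then have "m = 0" "\<alpha> = \<beta>" by (auto simp: mone_def fconst_def split: if_splits)
  then show ?case by simp
next
  case (Suc n)
  obtain \<gamma> p q where h: "p + q = m" "A \<alpha> \<gamma> p \<noteq> 0" "mpow A n \<gamma> \<beta> q \<noteq> 0"
    using Suc.prems by (auto elim: mmul_nonzeroE)
  from W0_exponent_nonzero[OF h(2)] obtain \<gamma>' where \<gamma>': "\<gamma> = mi_add \<alpha> \<gamma>'" "p = monom1 (tc \<gamma>')"
    by blast
  from Suc.IH[OF h(3)] have ih: "degree q = n" "mi_len \<beta> = mi_len \<gamma> + weight time_weight q"
    "Poly_Mapping.keys q \<subseteq> range tc" by auto
  have "Poly_Mapping.keys m \<subseteq> range tc"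
    using keys_add[of p q] h(1) \<gamma>'(2) ih(3) by auto
  then show ?case
    using ih \<gamma>' time_weight_tc[of \<gamma>'] unfolding h(1)[symmetric] weight_add by simp
qed

text \<open>The entries of the n-th power of the exponent are homogeneous of degree n in the times,
  so each coefficient of the exponential series comes from a single term.\<close>
lemma W0_entry: "W0 tc \<alpha> \<beta> m = mpow A (degree m) \<alpha> \<beta> m / fact (degree m)"
proof -
  have "mexp A \<alpha> \<beta> m = infsum (\<lambda>n. mpow A n \<alpha> \<beta> m / fact n) {degree m}"
    unfolding mexp_def by (rule infsum_cong_neutral) (use mpow_nonzero in force)+
  then show ?thesis by (simp add: W0_def W0_exponent_def)
qed

lemma W0_nonzero:
  "W0 tc \<alpha> \<beta> m \<noteq> 0 \<Longrightarrow> mi_len \<beta> = mi_len \<alpha> + weight time_weight m \<and> Poly_Mapping.keys m \<subseteq> range tc"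
  using mpow_nonzero by (simp add: W0_entry)

lemma row_finite_W0: "row_finite (W0 tc)"
  by (rule row_finite_if_weight_bound) (use W0_nonzero in simp)

lemma row_finite_W0_inv: "row_finite (W0_inv tc)"
  by (rule row_finite_if_weight_bound) (use W0_nonzero in \<open>simp add: W0_inv_def\<close>)

lemma W0_at_0: "W0 tc \<alpha> \<beta> 0 = (if \<alpha> = \<beta> then 1 else 0)"
  by (simp add: W0_entry mone_def fconst_def)

lemma W0_inv_at_0: "W0_inv tc \<alpha> \<beta> 0 = (if \<alpha> = \<beta> then 1 else 0)"
  by (simp add: W0_inv_def W0_at_0)

lemma row_finite_W0_exponent: "row_finite A"
proof (rule row_finite_if_weight_bound)
  fix \<alpha> \<beta> m assume "A \<alpha> \<beta> m \<noteq> 0"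
  then obtain \<gamma> where "\<beta> = mi_add \<alpha> \<gamma>" "m = monom1 (tc \<gamma>)"
    using W0_exponent_nonzero by blast
  then show "mi_len \<beta> \<le> mi_len \<alpha> + weight time_weight m"
    using time_weight_tc[of \<gamma>] by simp
qed

lemma row_finite_mpow: "row_finite (mpow A n)"
  by (rule row_finite_if_weight_bound) (use mpow_nonzero in fastforce)

lemma mderiv_W0_exponent: "mderiv (tc g) A = LamPow g"
proof (intro ext)
  fix \<alpha> \<beta> m
  show "mderiv (tc g) A \<alpha> \<beta> m = LamPow g \<alpha> \<beta> m"
  proof (cases "\<beta> = mi_add \<alpha> g \<and> m = 0")
    case True
    then show ?thesis by (simp add: mderiv_def fderiv_def W0_exponent_at fvar_def LamPow_def fconst_def)
  next
    case False
    have "A \<alpha> \<beta> (m + monom1 (tc g)) = 0"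
    proof (rule ccontr)
      assume "A \<alpha> \<beta> (m + monom1 (tc g)) \<noteq> 0"
      then obtain \<gamma> where "\<beta> = mi_add \<alpha> \<gamma>" "m + monom1 (tc g) = monom1 (tc \<gamma>)"
        using W0_exponent_nonzero by blast
      moreover from this(2) have "m = 0" "tc g = tc \<gamma>"
        by (blast dest: add_monom1_eq_monom1)+
      ultimately show False using False inj_tc by (metis injD)
    qed
    then show ?thesis using False by (auto simp: mderiv_def fderiv_def LamPow_def fconst_def)
  qed
qed

lemma mpow_mmul_LamPow_commute: "mmul (mpow A n) (LamPow g) = mmul (LamPow g) (mpow A n)"
proof (induction n)
  case 0
  then show ?case by (simp add: mmul_mone_left mmul_mone_right)
next
  case (Suc n)
  have "mmul (mpow A (Suc n)) (LamPow g) = mmul A (mmul (LamPow g) (mpow A n))"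
    using mmul_assoc[OF row_finite_W0_exponent row_finite_mpow] Suc by simp
  also have "\<dots> = mmul (LamPow g) (mpow A (Suc n))"
    by (simp add: mmul_assoc[OF row_finite_W0_exponent row_finite_LamPow, symmetric]
        mmul_assoc[OF row_finite_LamPow row_finite_W0_exponent] W0_exponent_mmul_LamPow_commute)
  finally show ?case .
qed

lemma mderiv_mpow:
  "mderiv (tc g) (mpow A (Suc n)) = msmult (of_nat (Suc n)) (mmul (LamPow g) (mpow A n))"
proof (induction n)
  case 0
  have "mderiv (tc g) (mpow A (Suc 0)) = madd (mmul (LamPow g) mone) (mmul A mzero)"
    using mderiv_mmul[OF row_finite_imp_prod_finite[OF row_finite_W0_exponent], of "tc g" mone]
    by (simp add: mderiv_W0_exponent mderiv_mone)
  then show ?case by (simp add: mmul_mzero_right madd_mzero msmult_def)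
next
  case (Suc n)
  let ?X = "mpow A (Suc n)" and ?L = "LamPow g"
  have "mderiv (tc g) (mpow A (Suc (Suc n))) = madd (mmul ?L ?X) (mmul A (mderiv (tc g) ?X))"
    using mderiv_mmul[OF row_finite_imp_prod_finite[OF row_finite_W0_exponent], of "tc g" ?X]
    by (simp add: mderiv_W0_exponent)
  also have "mmul A (mderiv (tc g) ?X) = msmult (of_nat (Suc n)) (mmul ?L ?X)"
  proof -
    have "mmul A (mderiv (tc g) ?X) = msmult (of_nat (Suc n)) (mmul A (mmul ?L (mpow A n)))"
      unfolding Suc by (rule mmul_msmult_right)
    also have "mmul A (mmul ?L (mpow A n)) = mmul (mmul A ?L) (mpow A n)"
      by (rule mmul_assoc[OF row_finite_W0_exponent row_finite_LamPow, symmetric])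
    also have "\<dots> = mmul ?L ?X"
      by (simp add: W0_exponent_mmul_LamPow_commute
          mmul_assoc[OF row_finite_LamPow row_finite_W0_exponent])
    finally show ?thesis .
  qed
  finally show ?case by (intro ext) (simp add: madd_def fadd_def msmult_def algebra_simps)
qed

lemma mderiv_W0: "mderiv (tc g) (W0 tc) = mmul (LamPow g) (W0 tc)"
proof (intro ext)
  fix \<alpha> \<beta> :: "'d mi" and m :: "'d tvar \<Rightarrow>\<^sub>0 nat"
  let ?d = "degree m" and ?v = "tc g"
  have "of_nat (Poly_Mapping.lookup m ?v + 1) * mpow A (Suc ?d) \<alpha> \<beta> (m + monom1 ?v)
     = of_nat (Suc ?d) * mpow A ?d (mi_add \<alpha> g) \<beta> m"
    using fun_cong[OF fun_cong[OF fun_cong[OF mderiv_mpow[of g ?d]]], of \<alpha> \<beta> m]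
    by (simp add: mderiv_def fderiv_def msmult_def LamPow_mmul)
  then have "mderiv ?v (W0 tc) \<alpha> \<beta> m = of_nat (Suc ?d) * mpow A ?d (mi_add \<alpha> g) \<beta> m / fact (Suc ?d)"
    unfolding mderiv_def fderiv_def W0_entry[of _ _ "m + monom1 ?v"] degree_add_monom1 by simp
  also have "\<dots> = mpow A ?d (mi_add \<alpha> g) \<beta> m / fact ?d"
    by (simp only: fact_Suc of_nat_mult) (simp del: of_nat_Suc)
  also have "\<dots> = mmul (LamPow g) (W0 tc) \<alpha> \<beta> m"
    by (simp add: LamPow_mmul W0_entry)
  finally show "mderiv ?v (W0 tc) \<alpha> \<beta> m = mmul (LamPow g) (W0 tc) \<alpha> \<beta> m" .
qed

lemma W0_mmul_LamPow_commute: "mmul (W0 tc) (LamPow g) = mmul (LamPow g) (W0 tc)"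
proof (intro ext)
  fix \<alpha> \<beta> :: "'d mi" and m :: "'d tvar \<Rightarrow>\<^sub>0 nat"
  have "mmul (W0 tc) (LamPow g) \<alpha> \<beta> m = (1 / fact (degree m)) * mmul (mpow A (degree m)) (LamPow g) \<alpha> \<beta> m"
    by (rule mmul_LamPow_scalar) (simp add: W0_entry)
  then show "mmul (W0 tc) (LamPow g) \<alpha> \<beta> m = mmul (LamPow g) (W0 tc) \<alpha> \<beta> m"
    by (simp add: mpow_mmul_LamPow_commute LamPow_mmul W0_entry)
qed

lemma mderiv_W0_inv: "mderiv (tc g) (W0_inv tc) = mneg (mmul (LamPow g) (W0_inv tc))"
proof (intro ext)
  fix \<alpha> \<beta> :: "'d mi" and m :: "'d tvar \<Rightarrow>\<^sub>0 nat"
  have "mderiv (tc g) (W0_inv tc) \<alpha> \<beta> m = - ((-1) ^ degree m * mderiv (tc g) (W0 tc) \<alpha> \<beta> m)"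
    unfolding mderiv_def fderiv_def W0_inv_def degree_add_monom1 by simp
  then show "mderiv (tc g) (W0_inv tc) \<alpha> \<beta> m = mneg (mmul (LamPow g) (W0_inv tc)) \<alpha> \<beta> m"
    by (simp add: mderiv_W0 mneg_def LamPow_mmul W0_inv_def)
qed

lemma W0_inv_mmul_LamPow_commute: "mmul (W0_inv tc) (LamPow g) = mmul (LamPow g) (W0_inv tc)"
proof (intro ext)
  fix \<alpha> \<beta> :: "'d mi" and m :: "'d tvar \<Rightarrow>\<^sub>0 nat"
  have "mmul (W0_inv tc) (LamPow g) \<alpha> \<beta> m = (-1) ^ degree m * mmul (W0 tc) (LamPow g) \<alpha> \<beta> m"
    by (rule mmul_LamPow_scalar) (simp add: W0_inv_def)
  then show "mmul (W0_inv tc) (LamPow g) \<alpha> \<beta> m = mmul (LamPow g) (W0_inv tc) \<alpha> \<beta> m"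
    by (simp add: W0_mmul_LamPow_commute LamPow_mmul W0_inv_def)
qed

lemma W0_at_add_other_var: "v \<notin> range tc \<Longrightarrow> W0 tc \<alpha> \<beta> (m + monom1 v) = 0"
proof (rule ccontr)
  assume v: "v \<notin> range tc" and nz: "W0 tc \<alpha> \<beta> (m + monom1 v) \<noteq> 0"
  have "v \<in> Poly_Mapping.keys (m + monom1 v)" by (simp add: in_keys_iff lookup_add)
  then show False using W0_nonzero[OF nz] v by blast
qed

lemma mderiv_W0_other_var: "v \<notin> range tc \<Longrightarrow> mderiv v (W0 tc) = mzero"
  by (intro ext) (unfold mderiv_def fderiv_def W0_at_add_other_var, simp add: mzero_def)

lemma mderiv_W0_inv_other_var: "v \<notin> range tc \<Longrightarrow> mderiv v (W0_inv tc) = mzero"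
  by (intro ext) (unfold mderiv_def fderiv_def W0_inv_def W0_at_add_other_var, simp add: mzero_def)

lemma mmul_W0_W0_inv: "mmul (W0 tc) (W0_inv tc) = mone"
proof (rule eq_mone_if_mderiv_eq_mzero)
  fix v
  have pf: "prod_finite (W0 tc) (W0_inv tc)"
    by (rule row_finite_imp_prod_finite[OF row_finite_W0])
  show "mderiv v (mmul (W0 tc) (W0_inv tc)) = mzero"
  proof (cases "v \<in> range tc")
    case True
    then obtain g where v: "v = tc g" by blast
    have "mmul (W0 tc) (mmul (LamPow g) (W0_inv tc)) = mmul (mmul (LamPow g) (W0 tc)) (W0_inv tc)"
      by (simp add: mmul_assoc[OF row_finite_W0 row_finite_LamPow, symmetric] W0_mmul_LamPow_commute)
    then show ?thesis
      unfolding mderiv_mmul[OF pf] v mderiv_W0 mderiv_W0_inv mmul_mneg_right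
      by (simp add: madd_mneg_self)
  next
    case False
    then show ?thesis
      unfolding mderiv_mmul[OF pf] mderiv_W0_other_var[OF False] mderiv_W0_inv_other_var[OF False]
      by (simp add: mmul_mzero_left mmul_mzero_right madd_mzero)
  qed
qed (subst mmul_at_0, auto simp: W0_at_0 W0_inv_at_0 split: if_splits)

lemma mmul_W0_inv_W0: "mmul (W0_inv tc) (W0 tc) = mone"
proof (rule eq_mone_if_mderiv_eq_mzero)
  fix v
  have pf: "prod_finite (W0_inv tc) (W0 tc)"
    by (rule row_finite_imp_prod_finite[OF row_finite_W0_inv])
  show "mderiv v (mmul (W0_inv tc) (W0 tc)) = mzero"
  proof (cases "v \<in> range tc")
    case True
    then obtain g where v: "v = tc g" by blast
    have "mmul (W0_inv tc) (mmul (LamPow g) (W0 tc)) = mmul (mmul (LamPow g) (W0_inv tc)) (W0 tc)"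
      by (simp add: mmul_assoc[OF row_finite_W0_inv row_finite_LamPow, symmetric]
          W0_inv_mmul_LamPow_commute)
    then show ?thesis
      unfolding mderiv_mmul[OF pf] v mderiv_W0 mderiv_W0_inv mmul_mneg_left
      by (intro ext) (simp add: madd_def mneg_def fadd_def mzero_def)
  next
    case False
    then show ?thesis
      unfolding mderiv_mmul[OF pf] mderiv_W0_other_var[OF False] mderiv_W0_inv_other_var[OF False]
      by (simp add: mmul_mzero_left mmul_mzero_right madd_mzero)
  qed
qed (subst mmul_at_0, auto simp: W0_at_0 W0_inv_at_0 split: if_splits)

lemma minv_W0: "minv (W0 tc) = W0_inv tc"
  by (rule minv_eqI[OF row_finite_W0 row_finite_W0_inv mmul_W0_W0_inv mmul_W0_inv_W0])

end

interpretation t1: time_labelling T1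
  by unfold_locales (auto simp: time_weight_def intro: injI)

interpretation t2: time_labelling T2
  by unfold_locales (auto simp: time_weight_def intro: injI)

section \<open>Cancelling an upper triangular factor\<close>

definition block_column :: "('d::finite) fmat \<Rightarrow> nat \<Rightarrow> 'd fmat" where
  "block_column X j = (\<lambda>\<alpha> \<gamma>. if mi_len \<gamma> = j then X \<alpha> \<gamma> else fconst 0)"

lemma row_finite_block_column: "row_finite (block_column X j)"
  by (rule upper_band_imp_row_finite[of _ j]) (auto simp: upper_band_def block_column_def)

lemma block_column_mmul_eq_sum:
  fixes X Y :: "('d::finite) fmat"
  shows "mmul (block_column X (mi_len \<delta>)) Y \<alpha> \<delta> m
     = (\<Sum>\<gamma>\<in>{\<gamma>. mi_len \<gamma> = mi_len \<delta>}. fmul (X \<alpha> \<gamma>) (Y \<gamma> \<delta>) m)"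
proof -
  have fin: "finite {\<gamma>::'d mi. mi_len \<gamma> = mi_len \<delta>}"
    by (rule finite_subset[OF _ finite_mi_len_le[of "mi_len \<delta>"]]) auto
  show ?thesis
    by (subst mmul_eq_sum[OF fin])
       (auto simp: block_column_def split: if_splits intro!: sum.cong)
qed

context
  fixes R H :: "('d::finite) fmat"
  assumes R_upper: "block_upper R"
    and R_diag: "\<And>\<alpha> \<beta>. mi_len \<alpha> = mi_len \<beta> \<Longrightarrow> R \<alpha> \<beta> = H \<alpha> \<beta>"
    and H_diag: "block_diagonal H"
begin

lemma block_column_mmul_diagonal_eq_0:
  assumes "mi_len \<delta> \<noteq> j"
  shows "mmul (block_column X j) H \<alpha> \<delta> m = 0"
proof (rule ccontr)
  assume "mmul (block_column X j) H \<alpha> \<delta> m \<noteq> 0"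
  then obtain \<gamma> p q where "block_column X j \<alpha> \<gamma> p \<noteq> 0" "H \<gamma> \<delta> q \<noteq> 0"
    by (rule mmul_nonzeroE)
  then show False
    using assms block_diagonal_nonzero[OF H_diag] by (auto simp: block_column_def split: if_splits)
qed

text \<open>If row \<alpha> of X vanishes left of the block column of \<delta>, the block upper triangular R
  contributes to entry (\<alpha>, \<delta>) of X R only through its diagonal block H.\<close>
lemma block_column_mmul_diagonal_eq_mmul:
  assumes left_zero: "\<And>\<gamma> p. mi_len \<gamma> < mi_len \<delta> \<Longrightarrow> X \<alpha> \<gamma> p = 0"
  shows "mmul (block_column X (mi_len \<delta>)) H \<alpha> \<delta> m = mmul X R \<alpha> \<delta> m"
proof -
  have fin: "finite {\<gamma>::'d mi. mi_len \<gamma> = mi_len \<delta>}"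
    by (rule finite_subset[OF _ finite_mi_len_le[of "mi_len \<delta>"]]) auto
  have "mmul X R \<alpha> \<delta> m = (\<Sum>\<gamma>\<in>{\<gamma>. mi_len \<gamma> = mi_len \<delta>}. fmul (X \<alpha> \<gamma>) (R \<gamma> \<delta>) m)"
  proof (rule mmul_eq_sum[OF fin])
    fix \<gamma> q r assume "X \<alpha> \<gamma> q \<noteq> 0" "R \<gamma> \<delta> r \<noteq> 0"
    then show "\<gamma> \<in> {\<gamma>. mi_len \<gamma> = mi_len \<delta>}"
      using left_zero R_upper unfolding block_upper_def by (metis mem_Collect_eq nat_neq_iff)
  qed
  then show ?thesis
    unfolding block_column_mmul_eq_sum by (simp add: R_diag)
qed

lemma block_upper_cancel_right:
  assumes H_inv: "mmul H B = mone" and XR: "block_upper (mmul X R)"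
  shows "block_upper X"
proof -
  have "X \<alpha> \<beta> p = 0" if "mi_len \<beta> < mi_len \<alpha>" for \<alpha> \<beta> p
    using that
  proof (induction "mi_len \<beta>" arbitrary: \<beta> p rule: less_induct)
    case less
    let ?Xj = "block_column X (mi_len \<beta>)"
    have "mmul ?Xj H \<alpha> \<delta> m = 0" for \<delta> m
    proof (cases "mi_len \<delta> = mi_len \<beta>")
      case True
      then have "mmul ?Xj H \<alpha> \<delta> m = mmul X R \<alpha> \<delta> m"
        using block_column_mmul_diagonal_eq_mmul[of \<delta> X \<alpha>] less by simp
      also have "\<dots> = 0"
        using XR True less.prems unfolding block_upper_def by simp
      finally show ?thesis .
    qed (use block_column_mmul_diagonal_eq_0 in simp)
    moreover have "?Xj = mmul (mmul ?Xj H) B"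
      using H_inv mmul_assoc[OF row_finite_block_column[of X]
          block_diagonal_upper_band[OF H_diag, THEN upper_band_imp_row_finite], where C=B]
      by (simp add: mmul_mone_right)
    ultimately have "?Xj \<alpha> \<beta> p = 0"
      by (metis mmul_nonzeroE)
    then show "X \<alpha> \<beta> p = 0"
      by (simp add: block_column_def)
  qed
  then show ?thesis
    unfolding block_upper_def by blast
qed

end

section \<open>The dressing argument\<close>

lemma mderiv_Gt:
  fixes G :: "('d::finite) mi \<Rightarrow> 'd mi \<Rightarrow> complex"
  shows "mderiv (T1 g) (Gt G) = mmul (LamPow g) (Gt G)"
proof -
  let ?W = "W0 (T1::'d mi \<Rightarrow> 'd tvar)" and ?G = "\<lambda>\<alpha> \<beta>. fconst (G \<alpha> \<beta>) :: 'd fps"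
    and ?V = "mtr (minv (W0 (T2::'d mi \<Rightarrow> 'd tvar)))"
  have V: "col_finite ?V"
    unfolding col_finite_mtr t2.minv_W0 by (rule t2.row_finite_W0_inv)
  have "mderiv (T1 g) (W0_inv T2) = mzero"
    by (rule t2.mderiv_W0_inv_other_var) auto
  then have "mderiv (T1 g) ?V = mzero"
    unfolding t2.minv_W0 by (simp add: mderiv_def mtr_def mzero_def fun_eq_iff)
  moreover have "mderiv (T1 g) ?G = mzero"
    by (intro ext) (simp add: mderiv_def mzero_def fderiv_fconst)
  moreover have "mderiv (T1 g) (mmul ?W ?G) = mmul (LamPow g) (mmul ?W ?G)"
    using calculation(2)
    by (simp add: mderiv_mmul[OF row_finite_imp_prod_finite[OF t1.row_finite_W0]] t1.mderiv_W0
        mmul_mzero_right madd_mzero mmul_assoc[OF row_finite_LamPow t1.row_finite_W0])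
  ultimately show ?thesis
    unfolding Gt_def
    by (simp add: mderiv_mmul[OF col_finite_imp_prod_finite[OF V]] mmul_mzero_right madd_mzero
        mmul_assoc_col_finite[OF row_finite_LamPow V])
qed

lemma Vab_nonzero: "Vab S a b \<alpha> \<beta> p \<noteq> 0 \<Longrightarrow> mi_len \<beta> = mi_len \<alpha>"
proof -
  assume "Vab S a b \<alpha> \<beta> p \<noteq> 0"
  then obtain \<gamma> q r where
    h: "mderiv (T1 (mi_e a)) (beta1 S) \<alpha> \<gamma> q \<noteq> 0" "Lam b \<gamma> \<beta> r \<noteq> 0"
    unfolding Vab_def by (rule mmul_nonzeroE)
  from h(1) have "beta1 S \<alpha> \<gamma> (q + monom1 (T1 (mi_e a))) \<noteq> 0"
    by (simp add: mderiv_def fderiv_def)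
  then have "mi_len \<alpha> = mi_len \<gamma> + 1"
    unfolding beta1_def by (auto split: if_splits)
  moreover from h(2) have "\<beta> = mi_add \<gamma> (mi_e b)"
    by (auto simp: Lam_def fconst_def split: if_splits)
  ultimately show ?thesis by simp
qed

lemma Uab_nonzero: "Uab S a b \<alpha> \<beta> p \<noteq> 0 \<Longrightarrow> mi_len \<beta> = mi_len \<alpha>"
proof -
  assume "Uab S a b \<alpha> \<beta> p \<noteq> 0"
  then have "Vab S a b \<alpha> \<beta> p \<noteq> 0 \<or> Vab S b a \<alpha> \<beta> p \<noteq> 0"
    by (auto simp: Uab_def madd_def mneg_def fadd_def)
  then show ?thesis using Vab_nonzero by blast
qed

lemma upper_band_Uab: "upper_band (Uab S a b) 0"
  unfolding upper_band_def using Uab_nonzero by fastforce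

lemma row_finite_Uab: "row_finite (Uab S a b)"
  by (rule upper_band_imp_row_finite[OF upper_band_Uab])

lemma block_upper_Uab: "block_upper (Uab S a b)"
  unfolding block_upper_def using Uab_nonzero by fastforce

locale factorization =
  fixes G :: "('d::finite) mi \<Rightarrow> 'd mi \<Rightarrow> complex"
    and S1 S2 H :: "'d fmat"
  assumes S1: "block_lower_unitriangular S1"
    and S2: "block_lower_unitriangular S2"
    and H_diag: "block_diagonal H"
    and H_inv: "minvertible H"
    and factorization: "Gt G = mmul (mmul (minv S1) H) (mtr (minv S2))"
begin

definition dS1 :: "'d mi \<Rightarrow> 'd fmat" where
  "dS1 g = mderiv (T1 g) S1"

text \<open>The derivative of the wave matrix S1 W0 in the time t_{1,g} is D g W0 (see mderiv_wave
  below); B g is the corresponding operator acting on S1 W0 itself.\<close>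
definition D :: "'d mi \<Rightarrow> 'd fmat" where
  "D g = madd (dS1 g) (mmul S1 (LamPow g))"

definition B :: "'d mi \<Rightarrow> 'd fmat" where
  "B g = mmul (D g) (minv S1)"

definition R :: "'d fmat" where
  "R = mmul H (mtr (minv S2))"

lemma row_finite_S1: "row_finite S1"
  by (rule block_lower_unitriangular_row_finite[OF S1])

lemma row_finite_minv_S1: "row_finite (minv S1)"
  by (rule block_lower_unitriangular_row_finite[OF block_lower_unitriangular_minv(3)[OF S1]])

lemma upper_band_dS1: "upper_band (dS1 g) 0"
  unfolding dS1_def by (rule upper_band_mderiv[OF block_lower_unitriangular_upper_band[OF S1]])

lemma upper_band_D: "upper_band (D g) (mi_len g)"
  unfolding D_def
  using upper_band_mmul[OF block_lower_unitriangular_upper_band[OF S1] upper_band_LamPow]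
  by (auto intro: upper_band_madd upper_band_mono[OF upper_band_dS1])

lemma upper_band_B: "upper_band (B g) (mi_len g)"
  unfolding B_def
  using upper_band_mmul[OF upper_band_D
      block_lower_unitriangular_upper_band[OF block_lower_unitriangular_minv(3)[OF S1]]]
  by simp

lemma row_finite_dS1: "row_finite (dS1 g)"
  and row_finite_D: "row_finite (D g)"
  and row_finite_B: "row_finite (B g)"
  using upper_band_dS1 upper_band_D upper_band_B by (blast intro: upper_band_imp_row_finite)+

lemma B_mmul_S1: "mmul (B g) S1 = D g"
  unfolding B_def
  by (simp add: mmul_assoc[OF row_finite_D row_finite_minv_S1]
      block_lower_unitriangular_minv(2)[OF S1] mmul_mone_right)

lemma S1_mmul_Gt: "mmul S1 (Gt G) = R"
proof -
  have "mmul S1 (mmul (minv S1) H) = H"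
    by (simp add: mmul_assoc[OF row_finite_S1 row_finite_minv_S1, symmetric]
        block_lower_unitriangular_minv(1)[OF S1] mmul_mone_left)
  moreover have "row_finite (mmul (minv S1) H)"
    by (rule row_finite_mmul[OF row_finite_minv_S1
          upper_band_imp_row_finite[OF block_diagonal_upper_band[OF H_diag]]])
  ultimately show ?thesis
    unfolding factorization R_def by (simp add: mmul_assoc[OF row_finite_S1, symmetric])
qed

lemma block_upper_R: "block_upper R"
  unfolding block_upper_def
proof (intro allI impI)
  fix \<alpha> \<beta> :: "'d mi" and p assume lt: "mi_len \<beta> < mi_len \<alpha>"
  show "R \<alpha> \<beta> p = 0"
  proof (rule ccontr)
    assume "R \<alpha> \<beta> p \<noteq> 0"
    then obtain \<gamma> q r where "H \<alpha> \<gamma> q \<noteq> 0" "minv S2 \<beta> \<gamma> r \<noteq> 0"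
      unfolding R_def mtr_def by (rule mmul_nonzeroE)
    moreover have "minv S2 \<beta> \<gamma> = fconst 0" if "mi_len \<beta> < mi_len \<gamma>"
      using block_lower_unitriangular_minv(3)[OF S2] that
      unfolding block_lower_unitriangular_def by simp
    ultimately show False
      using lt block_diagonal_nonzero[OF H_diag] by fastforce
  qed
qed

lemma R_diag: "mi_len \<alpha> = mi_len \<beta> \<Longrightarrow> R \<alpha> \<beta> = H \<alpha> \<beta>"
proof (rule ext)
  fix m assume eq: "mi_len \<alpha> = mi_len \<beta>"
  have S2_diag: "minv S2 \<beta> \<gamma> = fconst (if \<beta> = \<gamma> then 1 else 0)" if "mi_len \<gamma> = mi_len \<beta>" for \<gamma>
    using block_lower_unitriangular_minv(3)[OF S2] that
    unfolding block_lower_unitriangular_def by simp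
  have "R \<alpha> \<beta> m = (\<Sum>\<gamma>\<in>{\<beta>}. fmul (H \<alpha> \<gamma>) (mtr (minv S2) \<gamma> \<beta>) m)"
    unfolding R_def
  proof (rule mmul_eq_sum)
    fix \<gamma> q r assume h: "H \<alpha> \<gamma> q \<noteq> 0" "mtr (minv S2) \<gamma> \<beta> r \<noteq> 0"
    then have "mi_len \<gamma> = mi_len \<beta>"
      using block_diagonal_nonzero[OF H_diag] eq by simp
    then show "\<gamma> \<in> {\<beta>}"
      using h(2) S2_diag by (cases "\<beta> = \<gamma>") (auto simp: mtr_def)
  qed simp
  then show "R \<alpha> \<beta> m = H \<alpha> \<beta> m"
    by (simp add: mtr_def S2_diag fmul_fconst_right)
qed

lemma mderiv_R: "mderiv (T1 g) R = mmul (B g) R"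
proof -
  have "mderiv (T1 g) R = madd (mmul (dS1 g) (Gt G)) (mmul (mmul S1 (LamPow g)) (Gt G))"
    unfolding S1_mmul_Gt[symmetric] dS1_def
    by (simp add: mderiv_mmul[OF row_finite_imp_prod_finite[OF row_finite_S1]] mderiv_Gt
        mmul_assoc[OF row_finite_S1 row_finite_LamPow])
  also have "\<dots> = mmul (D g) (Gt G)"
    unfolding D_def
    by (rule mmul_madd_distrib_right[symmetric];
        intro row_finite_imp_prod_finite row_finite_dS1 row_finite_mmul row_finite_S1 row_finite_LamPow)
  also have "\<dots> = mmul (B g) R"
    unfolding B_mmul_S1[symmetric] S1_mmul_Gt[symmetric] by (rule mmul_assoc[OF row_finite_B row_finite_S1])
  finally show ?thesis .
qed

text \<open>B g R is the derivative of the block upper triangular R, so it is block upper triangular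
  itself, and the invertible block diagonal of R can be cancelled.\<close>
lemma block_upper_B: "block_upper (B g)"
proof -
  obtain C where "mmul H C = mone"
    using H_inv unfolding minvertible_def by blast
  then show ?thesis
    using block_upper_cancel_right[OF block_upper_R R_diag H_diag]
      block_upper_mderiv[OF block_upper_R, of "T1 g"] mderiv_R by metis
qed

lemma dS1_eq_0: "mi_len \<alpha> \<le> mi_len \<beta> \<Longrightarrow> dS1 g \<alpha> \<beta> m = 0"
proof -
  assume "mi_len \<alpha> \<le> mi_len \<beta>"
  then obtain c where "S1 \<alpha> \<beta> = fconst c"
    using S1 unfolding block_lower_unitriangular_def by (metis le_neq_implies_less)
  then show ?thesis
    by (simp add: dS1_def mderiv_def fderiv_fconst)
qed

lemma dS1_mmul_Lam:
  assumes le: "mi_len \<alpha> \<le> mi_len \<beta>"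
  shows "mmul (dS1 (mi_e a)) (Lam b) \<alpha> \<beta> m = Vab S1 a b \<alpha> \<beta> m"
proof (cases "\<exists>\<delta>. \<beta> = mi_add \<delta> (mi_e b)")
  case True
  then obtain \<delta> where \<beta>: "\<beta> = mi_add \<delta> (mi_e b)" by blast
  have "mderiv (T1 (mi_e a)) (beta1 S1) \<alpha> \<delta> m = dS1 (mi_e a) \<alpha> \<delta> m"
  proof (cases "mi_len \<alpha> = mi_len \<delta> + 1")
    case False
    then have "mi_len \<alpha> \<le> mi_len \<delta>" using le \<beta> by simp
    then show ?thesis using False dS1_eq_0 by (simp add: mderiv_def beta1_def fderiv_def)
  qed (simp add: dS1_def mderiv_def beta1_def)
  then show ?thesis
    unfolding Vab_def \<beta> Lam_eq_LamPow mmul_LamPow by simp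
next
  case False
  then show ?thesis unfolding Vab_def Lam_eq_LamPow by (simp add: mmul_LamPow_eq_0)
qed

lemma Uab_mmul_S1:
  assumes le: "mi_len \<alpha> \<le> mi_len \<beta>"
  shows "mmul (Uab S1 a b) S1 \<alpha> \<beta> m = Uab S1 a b \<alpha> \<beta> m"
proof -
  have S1_diag: "S1 \<gamma> \<beta> = fconst (if \<gamma> = \<beta> then 1 else 0)" if "mi_len \<gamma> = mi_len \<beta>" for \<gamma>
    using S1 that unfolding block_lower_unitriangular_def by simp
  have "mmul (Uab S1 a b) S1 \<alpha> \<beta> m = (\<Sum>\<gamma>\<in>{\<beta>}. fmul (Uab S1 a b \<alpha> \<gamma>) (S1 \<gamma> \<beta>) m)"
  proof (rule mmul_eq_sum)
    fix \<gamma> q r assume h: "Uab S1 a b \<alpha> \<gamma> q \<noteq> 0" "S1 \<gamma> \<beta> r \<noteq> 0"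
    have "mi_len \<beta> \<le> mi_len \<gamma>"
      using block_lower_unitriangular_upper_band[OF S1] h(2) unfolding upper_band_def by fastforce
    then have "mi_len \<gamma> = mi_len \<beta>"
      using Uab_nonzero[OF h(1)] le by simp
    then show "\<gamma> \<in> {\<beta>}"
      using h(2) S1_diag by (cases "\<gamma> = \<beta>") auto
  qed simp
  then show ?thesis by (simp add: S1_diag fmul_fconst_right)
qed

lemma mderiv_D: "mderiv (T1 h) (D g) = madd (mderiv (T1 h) (dS1 g)) (mmul (dS1 h) (LamPow g))"
  unfolding D_def dS1_def
  by (simp add: mderiv_madd mderiv_mmul[OF row_finite_imp_prod_finite[OF row_finite_S1]]
      mderiv_LamPow mmul_mzero_right madd_mzero)

lemma D_mmul_LamPow:
  "mmul (D g) (LamPow h) = madd (mmul (dS1 g) (LamPow h)) (mmul S1 (LamPow (mi_add g h)))"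
  unfolding D_def
  by (simp add: mmul_madd_distrib_right row_finite_imp_prod_finite row_finite_dS1
      row_finite_mmul[OF row_finite_S1 row_finite_LamPow] LamPow_mmul_LamPow
      mmul_assoc[OF row_finite_S1 row_finite_LamPow])

definition defect :: "'d \<Rightarrow> 'd \<Rightarrow> 'd fmat" where
  "defect a b = madd (B (mi_add (mi_e a) (mi_e b)))
     (mneg (madd (mderiv (T1 (mi_e a)) (B (mi_e b)))
       (madd (mmul (B (mi_e b)) (B (mi_e a))) (Uab S1 a b))))"

definition dressed_defect :: "'d \<Rightarrow> 'd \<Rightarrow> 'd fmat" where
  "dressed_defect a b = madd (D (mi_add (mi_e a) (mi_e b)))
     (mneg (madd (mderiv (T1 (mi_e a)) (D (mi_e b)))
       (madd (mmul (D (mi_e b)) (LamPow (mi_e a))) (mmul (Uab S1 a b) S1))))"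

lemma defect_mmul_S1: "mmul (defect a b) S1 = dressed_defect a b"
proof -
  let ?ea = "mi_e a" and ?eb = "mi_e b" and ?v = "T1 (mi_e a)"
  have rf: "row_finite (mderiv ?v (B ?eb))" "row_finite (mmul (B ?eb) (B ?ea))"
    "row_finite (madd (mmul (B ?eb) (B ?ea)) (Uab S1 a b))"
    "row_finite (madd (mderiv ?v (B ?eb)) (madd (mmul (B ?eb) (B ?ea)) (Uab S1 a b)))"
    by (intro row_finite_madd row_finite_mderiv row_finite_mmul row_finite_B row_finite_Uab)+
  have distrib: "mmul (defect a b) S1 = madd (D (mi_add ?ea ?eb))
      (mneg (madd (mmul (mderiv ?v (B ?eb)) S1)
        (madd (mmul (mmul (B ?eb) (B ?ea)) S1) (mmul (Uab S1 a b) S1))))"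
    unfolding defect_def
    by (simp add: mmul_madd_distrib_right row_finite_imp_prod_finite rf row_finite_B
        row_finite_mneg row_finite_Uab mmul_mneg_left B_mmul_S1)
  have "mderiv ?v (D ?eb) = madd (mmul (mderiv ?v (B ?eb)) S1) (mmul (B ?eb) (dS1 ?ea))"
    unfolding B_mmul_S1[symmetric] dS1_def
    by (rule mderiv_mmul[OF row_finite_imp_prod_finite[OF row_finite_B]])
  then have dB: "mmul (mderiv ?v (B ?eb)) S1 \<alpha> \<beta> m
      = mderiv ?v (D ?eb) \<alpha> \<beta> m - mmul (B ?eb) (dS1 ?ea) \<alpha> \<beta> m" for \<alpha> \<beta> m
    by (simp add: madd_def fadd_def)
  have "mmul (mmul (B ?eb) (B ?ea)) S1 = mmul (B ?eb) (D ?ea)"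
    unfolding B_mmul_S1[symmetric] by (rule mmul_assoc[OF row_finite_B row_finite_B])
  also have "\<dots> = madd (mmul (B ?eb) (dS1 ?ea)) (mmul (B ?eb) (mmul S1 (LamPow ?ea)))"
    unfolding D_def
    by (rule mmul_madd_distrib_left; intro row_finite_imp_prod_finite row_finite_B)
  also have "mmul (B ?eb) (mmul S1 (LamPow ?ea)) = mmul (D ?eb) (LamPow ?ea)"
    unfolding B_mmul_S1[symmetric] by (rule mmul_assoc[OF row_finite_B row_finite_S1, symmetric])
  finally have BB: "mmul (mmul (B ?eb) (B ?ea)) S1 \<alpha> \<beta> m
      = mmul (B ?eb) (dS1 ?ea) \<alpha> \<beta> m + mmul (D ?eb) (LamPow ?ea) \<alpha> \<beta> m" for \<alpha> \<beta> m
    by (simp add: madd_def fadd_def)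
  show ?thesis
    unfolding distrib dressed_defect_def
    by (intro ext) (simp add: madd_def mneg_def fadd_def dB BB)
qed

lemma dressed_defect_eq_0:
  assumes le: "mi_len \<alpha> \<le> mi_len \<beta>"
  shows "dressed_defect a b \<alpha> \<beta> m = 0"
proof -
  let ?ea = "mi_e a" and ?eb = "mi_e b" and ?v = "T1 (mi_e a)"
  have "dressed_defect a b \<alpha> \<beta> m = dS1 (mi_add ?ea ?eb) \<alpha> \<beta> m - (mderiv ?v (dS1 ?eb) \<alpha> \<beta> m
      + (mmul (dS1 ?ea) (Lam b) \<alpha> \<beta> m + (mmul (dS1 ?eb) (Lam a) \<alpha> \<beta> m
      + mmul (Uab S1 a b) S1 \<alpha> \<beta> m)))"
    unfolding dressed_defect_def mderiv_D D_mmul_LamPow Lam_eq_LamPow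
    by (simp add: D_def madd_def mneg_def fadd_def mi_add_commute)
  also have "\<dots> = - (Vab S1 a b \<alpha> \<beta> m + (Vab S1 b a \<alpha> \<beta> m + Uab S1 a b \<alpha> \<beta> m))"
    using dS1_eq_0[OF le] by (simp add: dS1_mmul_Lam[OF le] Uab_mmul_S1[OF le] mderiv_def fderiv_def)
  also have "\<dots> = 0"
    by (simp add: Uab_def madd_def mneg_def fadd_def)
  finally show ?thesis .
qed

text \<open>The defect is block upper triangular, like B and U, while defect times S1 is strictly
  block lower triangular (dressed_defect_eq_0); since S1 is invertible and block lower
  triangular, the defect vanishes.\<close>
lemma defect_eq_mzero: "defect a b = mzero"
proof (intro ext)
  fix \<alpha> \<beta> m
  show "defect a b \<alpha> \<beta> m = mzero \<alpha> \<beta> m"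
  proof (cases "mi_len \<beta> < mi_len \<alpha>")
    case True
    have "block_upper (defect a b)"
      unfolding defect_def
      by (intro block_upper_madd block_upper_mneg block_upper_mderiv block_upper_mmul
          block_upper_B block_upper_Uab)
    then show ?thesis
      using True by (simp add: block_upper_def mzero_def)
  next
    case False
    have "row_finite (defect a b)"
      unfolding defect_def
      by (intro row_finite_madd row_finite_mneg row_finite_mderiv row_finite_mmul row_finite_B
          row_finite_Uab)
    then have "defect a b = mmul (dressed_defect a b) (minv S1)"
      by (simp add: defect_mmul_S1[symmetric] mmul_assoc[OF _ row_finite_S1]
          block_lower_unitriangular_minv(1)[OF S1] mmul_mone_right)
    moreover have "mmul (dressed_defect a b) (minv S1) \<alpha> \<beta> m = 0"
    proof (rule ccontr)
      assume "mmul (dressed_defect a b) (minv S1) \<alpha> \<beta> m \<noteq> 0"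
      then obtain \<gamma> q r where N: "dressed_defect a b \<alpha> \<gamma> q \<noteq> 0" and S: "minv S1 \<gamma> \<beta> r \<noteq> 0"
        by (rule mmul_nonzeroE)
      from N have "mi_len \<gamma> < mi_len \<alpha>"
        by (meson dressed_defect_eq_0 not_le)
      moreover from S have "mi_len \<beta> \<le> mi_len \<gamma>"
        using block_lower_unitriangular_upper_band[OF block_lower_unitriangular_minv(3)[OF S1]]
        unfolding upper_band_def by fastforce
      ultimately show False using False by simp
    qed
    ultimately show ?thesis
      by (simp add: mzero_def)
  qed
qed

lemma D_add:
  "D (mi_add (mi_e a) (mi_e b)) = madd (madd (mderiv (T1 (mi_e a)) (D (mi_e b)))
     (mmul (D (mi_e b)) (LamPow (mi_e a)))) (mmul (Uab S1 a b) S1)"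
proof (intro ext)
  fix \<alpha> \<beta> m
  have "dressed_defect a b = mzero"
    unfolding defect_mmul_S1[symmetric] defect_eq_mzero by (rule mmul_mzero_left)
  then have "dressed_defect a b \<alpha> \<beta> m = 0"
    by (simp add: mzero_def)
  then show "D (mi_add (mi_e a) (mi_e b)) \<alpha> \<beta> m = madd (madd (mderiv (T1 (mi_e a)) (D (mi_e b)))
      (mmul (D (mi_e b)) (LamPow (mi_e a)))) (mmul (Uab S1 a b) S1) \<alpha> \<beta> m"
    unfolding dressed_defect_def by (simp add: madd_def mneg_def fadd_def algebra_simps)
qed

definition wave :: "'d fmat" where
  "wave = mmul S1 (W0 T1)"

lemma row_finite_wave: "row_finite wave"
  unfolding wave_def by (rule row_finite_mmul[OF row_finite_S1 t1.row_finite_W0])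

lemma mderiv_wave: "mderiv (T1 g) wave = mmul (D g) (W0 T1)"
proof -
  have "mderiv (T1 g) wave = madd (mmul (dS1 g) (W0 T1)) (mmul (mmul S1 (LamPow g)) (W0 T1))"
    unfolding wave_def dS1_def
    by (simp add: mderiv_mmul[OF row_finite_imp_prod_finite[OF row_finite_S1]] t1.mderiv_W0
        mmul_assoc[OF row_finite_S1 row_finite_LamPow])
  also have "\<dots> = mmul (D g) (W0 T1)"
    unfolding D_def
    by (rule mmul_madd_distrib_right[symmetric];
        intro row_finite_imp_prod_finite row_finite_dS1 row_finite_mmul row_finite_S1 row_finite_LamPow)
  finally show ?thesis .
qed

lemma mderiv_mderiv_wave:
  "mderiv (T1 g) (mderiv (T1 h) wave) = mmul (madd (mderiv (T1 g) (D h)) (mmul (D h) (LamPow g))) (W0 T1)"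
proof -
  have "mderiv (T1 g) (mderiv (T1 h) wave)
      = madd (mmul (mderiv (T1 g) (D h)) (W0 T1)) (mmul (mmul (D h) (LamPow g)) (W0 T1))"
    unfolding mderiv_wave
    by (simp add: mderiv_mmul[OF row_finite_imp_prod_finite[OF row_finite_D]] t1.mderiv_W0
        mmul_assoc[OF row_finite_D row_finite_LamPow])
  also have "\<dots> = mmul (madd (mderiv (T1 g) (D h)) (mmul (D h) (LamPow g))) (W0 T1)"
    by (rule mmul_madd_distrib_right[symmetric];
        intro row_finite_imp_prod_finite row_finite_mderiv row_finite_D row_finite_mmul row_finite_LamPow)
  finally show ?thesis .
qed

lemma wave_equation:
  "mderiv (T1 (mi_add (mi_e a) (mi_e b))) wave
     = madd (mderiv (T1 (mi_e a)) (mderiv (T1 (mi_e b)) wave)) (mmul (Uab S1 a b) wave)"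
proof -
  let ?X = "madd (mderiv (T1 (mi_e a)) (D (mi_e b))) (mmul (D (mi_e b)) (LamPow (mi_e a)))"
  have "mderiv (T1 (mi_add (mi_e a) (mi_e b))) wave = mmul (madd ?X (mmul (Uab S1 a b) S1)) (W0 T1)"
    unfolding mderiv_wave D_add ..
  also have "\<dots> = madd (mmul ?X (W0 T1)) (mmul (mmul (Uab S1 a b) S1) (W0 T1))"
    by (rule mmul_madd_distrib_right; intro row_finite_imp_prod_finite row_finite_madd
        row_finite_mderiv row_finite_mmul row_finite_D row_finite_LamPow row_finite_Uab row_finite_S1)
  also have "mmul (mmul (Uab S1 a b) S1) (W0 T1) = mmul (Uab S1 a b) wave"
    unfolding wave_def by (rule mmul_assoc[OF row_finite_Uab row_finite_S1])
  finally show ?thesis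
    unfolding mderiv_mderiv_wave .
qed

end

section \<open>The Baker function\<close>

lemma Psi1_eq_column: "Psi1 S z = (\<lambda>\<alpha>. mmul (mmul S (W0 T1)) (\<lambda>\<beta> _. fconst (chi z \<beta>)) \<alpha> \<delta>)"
  by (simp add: Psi1_def mmul_def fmul_fconst_right)

lemma vderiv_column: "vderiv v (\<lambda>\<alpha>. X \<alpha> \<delta>) = (\<lambda>\<alpha>. mderiv v X \<alpha> \<delta>)"
  by (simp add: vderiv_def mderiv_def)

lemma vadd_column: "vadd (\<lambda>\<alpha>. X \<alpha> \<delta>) (\<lambda>\<alpha>. Y \<alpha> \<delta>) = (\<lambda>\<alpha>. madd X Y \<alpha> \<delta>)"
  by (simp add: vadd_def madd_def)

lemma mvmul_column: "mvmul A (\<lambda>\<alpha>. X \<alpha> \<delta>) = (\<lambda>\<alpha>. mmul A X \<alpha> \<delta>)"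
  by (simp add: mvmul_def mmul_def)

lemma mderiv_mmul_const:
  assumes "row_finite A"
  shows "mderiv v (mmul A (\<lambda>\<alpha> \<beta>. fconst (c \<alpha> \<beta>))) = mmul (mderiv v A) (\<lambda>\<alpha> \<beta>. fconst (c \<alpha> \<beta>))"
proof -
  have "mderiv v (\<lambda>\<alpha> \<beta>. fconst (c \<alpha> \<beta>)) = mzero"
    by (intro ext) (simp add: mderiv_def mzero_def fderiv_fconst)
  then show ?thesis
    by (simp add: mderiv_mmul[OF row_finite_imp_prod_finite[OF assms]] mmul_mzero_right madd_mzero)
qed

lemma (in factorization) Baker_equation:
  "vderiv (T1 (mi_add (mi_e a) (mi_e b))) (Psi1 S1 z)
     = vadd (vderiv (T1 (mi_e a)) (vderiv (T1 (mi_e b)) (Psi1 S1 z))) (mvmul (Uab S1 a b) (Psi1 S1 z))"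
proof -
  define C :: "'d fmat" where "C = (\<lambda>\<beta> _. fconst (chi z \<beta>))"
  have Psi: "Psi1 S1 z = (\<lambda>\<alpha>. mmul wave C \<alpha> (\<lambda>_. 0))"
    unfolding Psi1_eq_column[where \<delta>="\<lambda>_. 0"] wave_def C_def ..
  have "mmul (mderiv (T1 (mi_add (mi_e a) (mi_e b))) wave) C
      = madd (mmul (mderiv (T1 (mi_e a)) (mderiv (T1 (mi_e b)) wave)) C) (mmul (Uab S1 a b) (mmul wave C))"
    unfolding wave_equation mmul_assoc[OF row_finite_Uab row_finite_wave, symmetric]
    by (rule mmul_madd_distrib_right;
        intro row_finite_imp_prod_finite row_finite_mderiv row_finite_mmul row_finite_wave row_finite_Uab)
  then show ?thesis
    unfolding Psi vderiv_column vadd_column mvmul_column C_def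
    by (simp add: mderiv_mmul_const row_finite_wave row_finite_mderiv)
qed

theorem mainTheorem10:
  fixes G :: "('d::finite) mi \<Rightarrow> 'd mi \<Rightarrow> complex"
    and S1 S2 H :: "'d fmat"
    and a b :: 'd
    and z :: "'d \<Rightarrow> complex"
  assumes "block_lower_unitriangular S1"
    and "block_lower_unitriangular S2"
    and "block_diagonal H"
    and "minvertible H"
    and "Gt G = mmul (mmul (minv S1) H) (mtr (minv S2))"
  shows "vderiv (T1 (mi_add (mi_e a) (mi_e b))) (Psi1 S1 z)
       = vadd (vderiv (T1 (mi_e a)) (vderiv (T1 (mi_e b)) (Psi1 S1 z)))
              (mvmul (Uab S1 a b) (Psi1 S1 z))"
proof -
  interpret factorization G S1 S2 H
    using assms by unfold_locales
  show ?thesis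
    by (rule Baker_equation)
qed

end
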